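(* Let $f\in C^1[0,1]$ with $f(0)=0$, $h:=f'$, and let $q$ satisfy condition (q). Then there exists $c^*\in\mathbb R$ with $$h(0)+2\sqrt{\liminf_{\varphi\to0^+}\frac{q(\varphi)}{\varphi}}\le c^*\le 2\sqrt{\sup_{\varphi\in(0,1]}\frac{q(\varphi)}{\varphi}}+\sup_{\varphi\in(0,1]}\frac{f(\varphi)}{\varphi}$$ such that problem $(P^{00}_c)$ admits a solution if and only if $c\ge c^*$, and in that case the solution is unique.
   Context: Condition (q): $q\in C[0,1]$, $q>0$ on $(0,1)$, $q(0)=q(1)=0$, and $\limsup_{\varphi\to0^+}q(\varphi)/\varphi<+\infty$. For $c\in\mathbb R$, a solution of problem $(P_c)$ is a function $z\in C[0,1]\cap C^1(0,1)$ with $\dot z(\varphi)=h(\varphi)-c-q(\varphi)/z(\varphi)$ and $z(\varphi)<0$ for all $\varphi\in(0,1)$, and $z(0)=0$. A solution of $(P^{00}_c)$ is a solution of $(P_c)$ which also satisfies $z(1)=0$. *)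

theory Defs
  imports "HOL-Analysis.Analysis"
begin

definition cond_q :: "(real \<Rightarrow> real) \<Rightarrow> bool" where
  "cond_q q \<longleftrightarrow> continuous_on {0..1} q \<and> (\<forall>x\<in>{0<..<1}. q x > 0) \<and> q 0 = 0 \<and> q 1 = 0 \<and>
     Limsup (at_right 0) (\<lambda>x. ereal (q x / x)) < \<infinity>"

definition solP :: "(real \<Rightarrow> real) \<Rightarrow> (real \<Rightarrow> real) \<Rightarrow> real \<Rightarrow> (real \<Rightarrow> real) \<Rightarrow> bool" where
  "solP h q c z \<longleftrightarrow> continuous_on {0..1} z \<and>
     (\<forall>x\<in>{0<..<1}. (z has_real_derivative (h x - c - q x / z x)) (at x)) \<and>
     continuous_on {0<..<1} (deriv z) \<and>
     (\<forall>x\<in>{0<..<1}. z x < 0) \<and> z 0 = 0"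

definition solP00 :: "(real \<Rightarrow> real) \<Rightarrow> (real \<Rightarrow> real) \<Rightarrow> real \<Rightarrow> (real \<Rightarrow> real) \<Rightarrow> bool" where
  "solP00 h q c z \<longleftrightarrow> solP h q c z \<and> z 1 = 0"

end

theory Submission
  imports Defs
begin

text \<open>
  Since \<open>-q/z\<close> increases with \<open>z < 0\<close>, solutions of \<open>z' = h - c - q/z\<close> obey a comparison
  principle; it gives uniqueness and shows that the speeds \<open>c\<close> for which \<open>(P\<^sup>0\<^sup>0\<^sub>c)\<close> is
  solvable form an upward closed set. Solutions are built by shooting backwards from
  \<open>z 1 = -m\<close>: truncating the singular term makes the equation Lipschitz, and because \<open>q > 0\<close>
  inside \<open>(0,1)\<close> the truncation becomes inactive on \<open>[\<phi>, 1]\<close> once it is small enough. A barrier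
  \<open>\<beta> < 0\<close> with \<open>\<beta>' \<ge> h - c - q/\<beta>\<close> keeps these solutions continuous at \<open>0\<close>, and \<open>m \<down> 0\<close> gives \<open>z 1 = 0\<close>.
  Decreasing limits of solutions are solutions, so the set of speeds is a closed ray \<open>[c\<^sup>*, \<infinity>)\<close>.
  The line \<open>f x - (F + \<surd>M) x\<close> is a barrier for \<open>c = 2\<surd>M + F\<close>, which gives the upper bound.
  For the lower bound, \<open>(z/x)' \<ge> (h x - c + 2\<surd>a)/x\<close> near \<open>0\<close> by AM-GM whenever \<open>q x \<ge> a x\<close>;
  for smaller \<open>c\<close> this forces \<open>z/x \<rightarrow> -\<infinity>\<close>, contradicting the bound \<open>z \<ge> -C x\<close>.
\<close>

lemma bounded_on_Icc:
  fixes f :: "real \<Rightarrow> real"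
  assumes "continuous_on {a..b} f"
  shows "\<exists>H. \<forall>x\<in>{a..b}. \<bar>f x\<bar> \<le> H"
  using compact_imp_bounded[OF compact_continuous_image[OF assms compact_Icc]]
  by (auto simp: bounded_real)

lemma inverse_lipschitz_below:
  fixes y1 y2 e Q :: real
  assumes "y1 \<le> -e" "y2 \<le> -e" "e > 0" "Q \<ge> 0"
  shows "\<bar>Q / y1 - Q / y2\<bar> \<le> Q / e\<^sup>2 * \<bar>y1 - y2\<bar>"
proof -
  have "e * e \<le> (- y1) * (- y2)" using assms by (intro mult_mono) auto
  then have "e\<^sup>2 \<le> y1 * y2" by (simp add: power2_eq_square)
  moreover have "Q / y1 - Q / y2 = Q * (y2 - y1) / (y1 * y2)" using assms by (simp add: field_simps)
  then have "\<bar>Q / y1 - Q / y2\<bar> = Q * \<bar>y1 - y2\<bar> / (y1 * y2)"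
    using assms by (simp add: abs_mult abs_minus_commute zero_less_mult_iff)
  moreover have "Q * \<bar>y1 - y2\<bar> / (y1 * y2) \<le> Q * \<bar>y1 - y2\<bar> / e\<^sup>2"
  proof (rule divide_left_mono)
    show "0 < y1 * y2 * e\<^sup>2" using assms by (simp add: mult_neg_neg)
  qed (use \<open>e\<^sup>2 \<le> y1 * y2\<close> assms in auto)
  ultimately show ?thesis by simp
qed

lemma continuous_on_IccI:
  fixes f :: "real \<Rightarrow> real"
  assumes "continuous (at a within {a..b}) f" "continuous (at b within {a..b}) f"
    and "\<And>x. x \<in> {a<..<b} \<Longrightarrow> isCont f x"
  shows "continuous_on {a..b} f"
  unfolding continuous_on_eq_continuous_within
proof
  fix x assume "x \<in> {a..b}"
  then consider "x = a" | "x = b" | "x \<in> {a<..<b}" by fastforce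
  then show "continuous (at x within {a..b}) f"
    by cases (use assms in \<open>auto intro: continuous_at_imp_continuous_within\<close>)
qed

lemma continuous_within_squeeze_nonpos:
  fixes z \<beta> :: "real \<Rightarrow> real"
  assumes "continuous (at x within S) \<beta>" "\<beta> x = 0" "z x = 0"
    and bounds: "\<And>y. y \<in> S \<Longrightarrow> \<beta> y \<le> z y \<and> z y \<le> 0"
  shows "continuous (at x within S) z"
proof -
  have "eventually (\<lambda>y. \<beta> y \<le> z y \<and> z y \<le> 0) (at x within S)"
    unfolding eventually_at_filter by (intro always_eventually) (use bounds in auto)
  then have "(z \<longlongrightarrow> 0) (at x within S)"
    using assms(1,2) by (intro tendsto_sandwich[of \<beta> z _ "\<lambda>_. 0"]) (auto simp: continuous_within elim: eventually_mono)
  then show ?thesis using assms(3) by (simp add: continuous_within)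
qed

text \<open>A supremum of continuous functions is lower semicontinuous; at a maximum it is also upper
  semicontinuous.\<close>
lemma continuous_within_Sup_at_max:
  fixes Y :: "nat \<Rightarrow> real \<Rightarrow> real" and Z :: "real \<Rightarrow> real"
  assumes cont: "\<And>n. continuous (at x within S) (Y n)"
    and le: "\<And>n y. y \<in> S \<Longrightarrow> Y n y \<le> Z y" and max: "\<And>y. y \<in> S \<Longrightarrow> Z y \<le> Z x"
    and lim: "(\<lambda>n. Y n x) \<longlonglongrightarrow> Z x"
  shows "continuous (at x within S) Z"
  unfolding continuous_within
proof (rule order_tendstoI)
  fix e assume "Z x < e"
  then show "eventually (\<lambda>y. Z y < e) (at x within S)"
    unfolding eventually_at_filter by (intro always_eventually) (use max in fastforce)
next
  fix e assume "e < Z x"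
  then obtain n where "e < Y n x" using order_tendstoD(1)[OF lim] by (meson eventually_sequentially order_refl)
  then have "eventually (\<lambda>y. e < Y n y) (at x within S)"
    using cont[of n] by (auto simp: continuous_within intro: order_tendstoD(1))
  moreover have "eventually (\<lambda>y. y \<in> S) (at x within S)" by (simp add: eventually_at_filter)
  ultimately show "eventually (\<lambda>y. e < Z y) (at x within S)"
    by eventually_elim (use le in \<open>fastforce intro: less_le_trans\<close>)
qed

lemma mono_on_tendsto_SUP_at_left:
  fixes W :: "real \<Rightarrow> real"
  assumes ab: "a < b" and mono: "mono_on {a<..<b} W" and bdd: "bdd_above (W ` {a<..<b})"
  shows "(W \<longlongrightarrow> (SUP x\<in>{a<..<b}. W x)) (at_left b)"
proof (rule order_tendstoI)
  fix y assume "y < (SUP x\<in>{a<..<b}. W x)"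
  then obtain x0 where x0: "x0 \<in> {a<..<b}" "y < W x0" using less_cSUP_iff[OF _ bdd] ab by auto
  have "eventually (\<lambda>x. x \<in> {x0<..<b}) (at_left b)" using eventually_at_left_real x0 by auto
  then show "eventually (\<lambda>x. y < W x) (at_left b)"
    by eventually_elim (use x0 mono_onD[OF mono] in \<open>fastforce intro: less_le_trans\<close>)
next
  fix y assume y: "(SUP x\<in>{a<..<b}. W x) < y"
  show "eventually (\<lambda>x. W x < y) (at_left b)"
    using eventually_at_left_real[OF ab] by (rule eventually_mono) (use y cSUP_upper[OF _ bdd] in fastforce)
qed

lemma add_divide_ge_2_sqrt:
  fixes u a :: real
  assumes "u > 0" "a \<ge> 0"
  shows "u + a / u \<ge> 2 * sqrt a"
  using arith_geo_mean_sqrt[of u "a / u"] assms by simp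

lemma eq_atLeast_Inf:
  fixes S :: "real set"
  assumes ne: "S \<noteq> {}" and bdd: "bdd_below S"
    and up: "\<And>c c'. c \<in> S \<Longrightarrow> c < c' \<Longrightarrow> c' \<in> S"
    and closed: "\<And>c. (\<And>c'. c < c' \<Longrightarrow> c' \<in> S) \<Longrightarrow> c \<in> S"
  shows "S = {Inf S..}"
proof -
  have above: "c \<in> S" if "Inf S < c" for c
    using that cInf_less_iff[OF ne bdd] up by blast
  then have "Inf S \<in> S" by (rule closed)
  then show ?thesis using above cInf_lower[OF _ bdd] by (fastforce simp: le_less)
qed

lemma lower_bound_from_derivative:
  fixes y y' :: "real \<Rightarrow> real"
  assumes "a \<le> b" "continuous_on {a..b} y"
    and "\<And>t. t \<in> {a<..<b} \<Longrightarrow> (y has_real_derivative y' t) (at t)"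
    and "\<And>t. t \<in> {a<..<b} \<Longrightarrow> y' t \<ge> -C"
  shows "y b \<ge> y a - C * (b - a)"
proof -
  have "(\<lambda>t. y t + C * t) a \<le> (\<lambda>t. y t + C * t) b"
  proof (rule DERIV_nonneg_imp_increasing_open[of a b])
    fix t assume t: "a < t" "t < b"
    show "\<exists>z. ((\<lambda>t. y t + C * t) has_real_derivative z) (at t) \<and> 0 \<le> z"
      using assms(3)[of t] assms(4)[of t] t
      by (intro exI[of _ "y' t + C"]) (auto intro!: derivative_eq_intros)
  qed (use assms in \<open>auto intro!: continuous_intros\<close>)
  then show ?thesis by (simp add: algebra_simps)
qed

lemma has_real_derivative_of_integral_eq:
  fixes U K :: "real \<Rightarrow> real"
  assumes K: "continuous_on {a..b} K"
    and U: "\<And>x. x \<in> {a..b} \<Longrightarrow> U x = U a + integral {a..x} K"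
    and x: "x \<in> {a<..<b}"
  shows "(U has_real_derivative K x) (at x)"
proof -
  have "((\<lambda>x. U a + integral {a..x} K) has_real_derivative K x) (at x within {a..b})"
    using integral_has_real_derivative[OF K] x by (auto intro!: derivative_eq_intros)
  then have "((\<lambda>x. U a + integral {a..x} K) has_real_derivative K x) (at x)"
    using x by (subst (asm) at_within_interior) auto
  then show ?thesis
  proof (rule has_field_derivative_transform_within_open[where S="{a<..<b}"])
    fix y assume "y \<in> {a<..<b}"
    then show "U a + integral {a..y} K = U y" using U[of y] by simp
  qed (use x in auto)
qed

lemma integral_eq_diff_of_derivative:
  fixes f f' :: "real \<Rightarrow> real"
  assumes "a \<le> x" "\<And>t. t \<in> {a..x} \<Longrightarrow> (f has_real_derivative f' t) (at t)"
  shows "integral {a..x} f' = f x - f a"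
proof (rule integral_unique, rule fundamental_theorem_of_calculus[OF assms(1)])
  fix t assume "t \<in> {a..x}"
  then show "(f has_vector_derivative f' t) (at t within {a..x})"
    using assms(2) by (auto simp: has_real_derivative_iff_has_vector_derivative intro: has_vector_derivative_at_within)
qed

text \<open>Dominated convergence passes the integral equations \<open>u\<^sub>n x = u\<^sub>n a + \<integral>\<^sub>a\<^sup>x k\<^sub>n\<close> to the
  pointwise limits; the uniform bound on the integrands also makes the limit Lipschitz.\<close>
lemma integral_equation_limit:
  fixes u k :: "nat \<Rightarrow> real \<Rightarrow> real" and U K :: "real \<Rightarrow> real"
  assumes ab: "a \<le> b"
    and u: "\<And>n x. x \<in> {a..b} \<Longrightarrow> u n x = u n a + integral {a..x} (k n)"
    and kc: "\<And>n. continuous_on {a..b} (k n)"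
    and kB: "\<And>n x. x \<in> {a..b} \<Longrightarrow> \<bar>k n x\<bar> \<le> B"
    and uU: "\<And>x. x \<in> {a..b} \<Longrightarrow> (\<lambda>n. u n x) \<longlonglongrightarrow> U x"
    and kK: "\<And>x. x \<in> {a..b} \<Longrightarrow> (\<lambda>n. k n x) \<longlonglongrightarrow> K x"
  shows "\<And>x. x \<in> {a..b} \<Longrightarrow> U x = U a + integral {a..x} K"
    and "B-lipschitz_on {a..b} U"
proof -
  have int: "k n integrable_on {s..t}" if "s \<in> {a..b}" "t \<in> {a..b}" for n s t
    using that by (intro integrable_continuous_real continuous_on_subset[OF kc]) auto
  show "U x = U a + integral {a..x} K" if x: "x \<in> {a..b}" for x
  proof -
    have "(\<lambda>n. integral {a..x} (k n)) \<longlonglongrightarrow> integral {a..x} K"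
      by (rule dominated_convergence(2)[where h="\<lambda>_. B"]) (use int ab x kB kK in auto)
    then have "(\<lambda>n. u n a + integral {a..x} (k n)) \<longlonglongrightarrow> U a + integral {a..x} K"
      using uU[of a] ab by (auto intro!: tendsto_add)
    moreover have "(\<lambda>n. u n a + integral {a..x} (k n)) = (\<lambda>n. u n x)" using u[OF x] by simp
    ultimately show ?thesis using uU[OF x] LIMSEQ_unique by metis
  qed
  have step: "\<bar>u n x - u n y\<bar> \<le> B * \<bar>x - y\<bar>" if xy: "y \<le> x" "x \<in> {a..b}" "y \<in> {a..b}" for n x y
  proof -
    have "integral {a..x} (k n) = integral {a..y} (k n) + integral {y..x} (k n)"
      using Henstock_Kurzweil_Integration.integral_combine[OF _ _ int[of a x]] xy by auto
    then have "u n x - u n y = integral {y..x} (k n)" using u[of x n] u[of y n] xy by auto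
    moreover have "norm (integral {y..x} (k n)) \<le> B * (x - y)"
      by (rule integral_bound) (use kB xy continuous_on_subset[OF kc, of "{y..x}"] in auto)
    ultimately show ?thesis using xy by auto
  qed
  show "B-lipschitz_on {a..b} U"
  proof (rule lipschitz_on_leI)
    fix x y assume xy: "x \<in> {a..b}" "y \<in> {a..b}" "x \<le> y"
    have "(\<lambda>n. \<bar>u n y - u n x\<bar>) \<longlonglongrightarrow> \<bar>U y - U x\<bar>"
      using uU xy by (intro tendsto_intros) auto
    then have "\<bar>U y - U x\<bar> \<le> B * \<bar>y - x\<bar>"
      by (rule LIMSEQ_le_const2) (use step xy in auto)
    then show "dist (U x) (U y) \<le> B * dist x y" by (simp add: dist_real_def abs_minus_commute)
  next
    show "0 \<le> B" using kB[of a 0] ab by auto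
  qed
qed

lemma nondecreasing_while_positive:
  fixes v v' :: "real \<Rightarrow> real"
  assumes ab: "a \<le> b" and vc: "continuous_on {a..b} v"
    and vd: "\<And>t. t \<in> {a<..<b} \<Longrightarrow> (v has_real_derivative v' t) (at t)"
    and vp: "\<And>t. t \<in> {a<..<b} \<Longrightarrow> v t > 0 \<Longrightarrow> v' t \<ge> 0"
    and va: "v a > 0"
  shows "v b \<ge> v a"
proof -
  have mono: "v a \<le> v s" if "a \<le> s" "s \<le> b" "\<And>u. u \<in> {a<..<s} \<Longrightarrow> v u > 0" for s
  proof (rule DERIV_nonneg_imp_increasing_open[of a s])
    fix u assume "a < u" "u < s"
    then show "\<exists>y. (v has_real_derivative y) (at u) \<and> 0 \<le> y"
      using that vd[of u] vp[of u] by auto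
  qed (use that continuous_on_subset[OF vc] in auto)
  have pos: "v t > v a / 2" if t: "t \<in> {a..b}" for t
  proof (rule ccontr)
    assume "\<not> v t > v a / 2"
    define S where "S = {t \<in> {a..b}. v t \<le> v a / 2}"
    have "t \<in> S" using t \<open>\<not> v t > v a / 2\<close> unfolding S_def by auto
    moreover have "closed S"
      unfolding S_def by (intro continuous_on_closed_Collect_le vc continuous_intros) auto
    moreover have bS: "bdd_below S" unfolding S_def by (auto intro: bdd_belowI[of _ a])
    ultimately have sS: "Inf S \<in> S" using closed_contains_Inf by blast
    have "v u > 0" if "u \<in> {a<..<Inf S}" for u
    proof -
      have "u \<notin> S" using that cInf_lower[OF _ bS, of u] by force
      then have "v u > v a / 2" using that sS unfolding S_def by auto
      then show ?thesis using va by simp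
    qed
    then have "v a \<le> v (Inf S)" using sS unfolding S_def by (intro mono) auto
    then show False using sS va unfolding S_def by auto
  qed
  have "v u > 0" if "u \<in> {a<..<b}" for u using pos[of u] that va by auto
  then show ?thesis using ab by (intro mono) auto
qed

text \<open>Time reversal turns \<open>w' \<le> L w\<close> into the hypothesis of the previous lemma for
  \<open>w (a + b - s) exp (L (s - a - b))\<close>.\<close>
lemma positive_backward_of_linear_growth:
  fixes w w' :: "real \<Rightarrow> real"
  assumes ab: "a \<le> b" and wc: "continuous_on {a..b} w"
    and wd: "\<And>t. t \<in> {a<..<b} \<Longrightarrow> (w has_real_derivative w' t) (at t)"
    and wp: "\<And>t. t \<in> {a<..<b} \<Longrightarrow> w t > 0 \<Longrightarrow> w' t \<le> L * w t"
    and wb: "w b > 0"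
  shows "w a > 0"
proof -
  define v where "v = (\<lambda>s. w (a + b - s) * exp (L * (s - a - b)))"
  define v' where "v' = (\<lambda>s. (L * w (a + b - s) - w' (a + b - s)) * exp (L * (s - a - b)))"
  have "v b \<ge> v a"
  proof (rule nondecreasing_while_positive[where v=v and v'=v'])
    show "continuous_on {a..b} v" unfolding v_def
      by (intro continuous_intros continuous_on_compose2[OF wc]) auto
  next
    fix s assume s: "s \<in> {a<..<b}"
    then have r: "a + b - s \<in> {a<..<b}" by auto
    have "((\<lambda>s. a + b - s) has_real_derivative -1) (at s)" by (auto intro!: derivative_eq_intros)
    from DERIV_chain2[OF wd[OF r] this]
    have "((\<lambda>s. w (a + b - s)) has_real_derivative w' (a + b - s) * -1) (at s)" .
    moreover have "((\<lambda>s. exp (L * (s - a - b))) has_real_derivative exp (L * (s - a - b)) * L) (at s)"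
      by (auto intro!: derivative_eq_intros)
    ultimately show "(v has_real_derivative v' s) (at s)"
      unfolding v_def v'_def by (auto dest: DERIV_mult simp: algebra_simps)
    assume "v s > 0"
    then have "w (a + b - s) > 0" by (simp add: v_def zero_less_mult_iff)
    then show "v' s \<ge> 0" using wp[OF r] by (simp add: v'_def)
  qed (use ab wb in \<open>auto simp: v_def\<close>)
  moreover have "v a > 0" using wb by (simp add: v_def)
  ultimately have "v b > 0" by linarith
  then show ?thesis by (simp add: v_def zero_less_mult_iff)
qed

text \<open>Backward uniqueness: \<open>\<plusminus>w exp (L s)\<close> cannot decrease while positive, so it cannot reach \<open>w b = 0\<close>.\<close>
lemma zero_backward_of_lipschitz_derivative:
  fixes w w' :: "real \<Rightarrow> real"
  assumes wc: "continuous_on {a..b} w"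
    and wd: "\<And>t. t \<in> {a<..<b} \<Longrightarrow> (w has_real_derivative w' t) (at t)"
    and wb: "\<And>t. t \<in> {a<..<b} \<Longrightarrow> \<bar>w' t\<bar> \<le> L * \<bar>w t\<bar>"
    and w0: "w b = 0" and t: "t \<in> {a..b}"
  shows "w t = 0"
proof -
  have not_pos: "\<not> u t > 0"
    if uc: "continuous_on {a..b} u" and ud: "\<And>s. s \<in> {a<..<b} \<Longrightarrow> (u has_real_derivative u' s) (at s)"
      and ub: "\<And>s. s \<in> {a<..<b} \<Longrightarrow> \<bar>u' s\<bar> \<le> L * \<bar>u s\<bar>" and u0: "u b = 0" for u u'
  proof
    assume pos: "u t > 0"
    define v where "v = (\<lambda>s. u s * exp (L * s))"
    have "v b \<ge> v t"
    proof (rule nondecreasing_while_positive[where v=v and v'="\<lambda>s. (u' s + L * u s) * exp (L * s)"])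
      show "continuous_on {t..b} v" unfolding v_def
        using t by (intro continuous_intros continuous_on_subset[OF uc]) auto
    next
      fix s assume s: "s \<in> {t<..<b}"
      then have s': "s \<in> {a<..<b}" using t by auto
      show "(v has_real_derivative (u' s + L * u s) * exp (L * s)) (at s)"
        unfolding v_def using ud[OF s'] by (auto intro!: derivative_eq_intros simp: algebra_simps)
      assume "v s > 0"
      then have "u s > 0" by (simp add: v_def zero_less_mult_iff)
      then have "u' s \<ge> - (L * u s)" using ub[OF s'] by (simp add: abs_le_iff)
      then show "(u' s + L * u s) * exp (L * s) \<ge> 0" by simp
    qed (use t pos in \<open>auto simp: v_def\<close>)
    moreover have "v t > 0" using pos by (simp add: v_def)
    ultimately show False using u0 by (simp add: v_def)
  qed
  have "\<not> - w t > 0"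
  proof (rule not_pos[where u'="\<lambda>s. - w' s"])
    show "continuous_on {a..b} (\<lambda>s. - w s)" using wc by (intro continuous_intros)
  qed (use wd wb w0 in \<open>auto intro: DERIV_minus\<close>)
  then show ?thesis using not_pos[OF wc wd wb w0] by simp
qed

section \<open>Escaping from the singularity\<close>

lemma log_drift_lower_bound:
  fixes y y' :: "real \<Rightarrow> real"
  assumes C: "C > 0" and e: "\<epsilon> > 0" and d: "d \<ge> 0" and q0: "q0 \<ge> 0"
    and yc: "continuous_on {p..p+d} y"
    and yd: "\<And>t. t \<in> {p<..<p+d} \<Longrightarrow> (y has_real_derivative y' t) (at t)"
    and yb: "\<And>t. t \<in> {p<..<p+d} \<Longrightarrow> y' t \<ge> -C + q0 / (\<epsilon> + C * (t - p))"
    and yp: "y p \<ge> -\<epsilon>"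
  shows "y (p + d) \<ge> -\<epsilon> - C * d + (q0 / C) * ln (1 + C * d / \<epsilon>)"
proof -
  define \<Phi> where "\<Phi> t = y t + \<epsilon> + C * (t - p) - (q0 / C) * ln (1 + C * (t - p) / \<epsilon>)" for t
  have "\<Phi> p \<le> \<Phi> (p + d)"
  proof (rule DERIV_nonneg_imp_increasing_open[of p "p+d" \<Phi>])
    fix t assume t: "p < t" "t < p + d"
    have pos: "1 + C * (t - p) / \<epsilon> > 0" using t C e by (simp add: add_pos_nonneg)
    have "(\<Phi> has_real_derivative y' t + C - (q0 / C) * ((C / \<epsilon>) / (1 + C * (t - p) / \<epsilon>))) (at t)"
      unfolding \<Phi>_def using yd[of t] t pos e C by (auto intro!: derivative_eq_intros)
    moreover have "(q0 / C) * ((C / \<epsilon>) / (1 + C * (t - p) / \<epsilon>)) = q0 / (\<epsilon> + C * (t - p))"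
      using C e pos by (simp add: field_simps)
    ultimately show "\<exists>z. (\<Phi> has_real_derivative z) (at t) \<and> 0 \<le> z"
      using yb[of t] t by force
  next
    have "1 + C * (t - p) / \<epsilon> \<noteq> 0" if "p \<le> t" for t
      using C e that by (smt (verit) divide_nonneg_pos mult_nonneg_nonneg)
    then show "continuous_on {p..p+d} \<Phi>" unfolding \<Phi>_def using yc e by (intro continuous_intros) auto
  qed (use d in simp)
  then show ?thesis using yp unfolding \<Phi>_def by simp
qed

lemma ln_large_near_zero:
  fixes q0 C \<delta> R :: real
  assumes "q0 > 0" "C > 0" "\<delta> > 0"
  obtains \<epsilon>0 where "0 < \<epsilon>0" "\<epsilon>0 \<le> 1"
    "\<And>\<epsilon>. 0 < \<epsilon> \<Longrightarrow> \<epsilon> \<le> \<epsilon>0 \<Longrightarrow> (q0 / C) * ln (1 + C * \<delta> / \<epsilon>) > R"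
proof
  define E where "E = exp (\<bar>R\<bar> * C / q0 + 1)"
  have E: "E > 0" unfolding E_def by simp
  show "0 < min 1 (C * \<delta> / E)" "min 1 (C * \<delta> / E) \<le> 1" using assms E by auto
  fix \<epsilon> :: real assume e: "0 < \<epsilon>" "\<epsilon> \<le> min 1 (C * \<delta> / E)"
  then have "E \<le> C * \<delta> / \<epsilon>" using E assms by (simp add: field_simps)
  then have "ln E < ln (1 + C * \<delta> / \<epsilon>)" using E by (intro ln_less_cancel_iff[THEN iffD2]) auto
  then have "\<bar>R\<bar> * C / q0 < ln (1 + C * \<delta> / \<epsilon>)" unfolding E_def by simp
  then have "\<bar>R\<bar> < (q0 / C) * ln (1 + C * \<delta> / \<epsilon>)" using assms by (simp add: field_simps)
  then show "(q0 / C) * ln (1 + C * \<delta> / \<epsilon>) > R" by simp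
qed

text \<open>If \<open>y p \<ge> -\<epsilon>\<close>, then \<open>-y\<close> stays below \<open>\<epsilon> + C (t - p)\<close> on \<open>[p, p + \<delta>]\<close>, so the singular
  term pushes \<open>y\<close> up by \<open>(qlo / C) ln (1 + C \<delta> / \<epsilon>)\<close>, too much for \<open>y 1 \<le> 0\<close>.\<close>
lemma below_level_of_log_drift:
  fixes y y' q :: "real \<Rightarrow> real"
  assumes C: "C > 0" and e: "\<epsilon> > 0" "\<epsilon> \<le> 1" and dl: "\<delta> > 0" and p: "0 \<le> p" "p + \<delta> \<le> 1"
    and qlo: "qlo > 0"
    and big: "(qlo / C) * ln (1 + C * \<delta> / \<epsilon>) > 1 + C * \<delta> + C"
    and yc: "continuous_on {p..1} y"
    and yd: "\<And>t. t \<in> {p<..<1} \<Longrightarrow> (y has_real_derivative y' t) (at t)"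
    and yb1: "\<And>t. t \<in> {p<..<1} \<Longrightarrow> y' t \<ge> -C"
    and yb2: "\<And>t. t \<in> {p<..<p+\<delta>} \<Longrightarrow> y' t \<ge> -C + q t / max (- y t) \<epsilon>"
    and qb: "\<And>t. t \<in> {p..p+\<delta>} \<Longrightarrow> q t \<ge> qlo"
    and y1: "y 1 \<le> 0"
  shows "y p < -\<epsilon>"
proof (rule ccontr)
  assume "\<not> y p < -\<epsilon>"
  then have yp: "y p \<ge> -\<epsilon>" by simp
  have low: "y t \<ge> -\<epsilon> - C * (t - p)" if t: "t \<in> {p..p+\<delta>}" for t
  proof -
    have "y t \<ge> y p - C * (t - p)"
      by (rule lower_bound_from_derivative[where y'=y']) (use t p yc yd yb1 in \<open>auto intro: continuous_on_subset\<close>)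
    then show ?thesis using yp by simp
  qed
  have "y (p + \<delta>) \<ge> -\<epsilon> - C * \<delta> + (qlo / C) * ln (1 + C * \<delta> / \<epsilon>)"
  proof (rule log_drift_lower_bound[where y'=y'])
    fix t assume t: "t \<in> {p<..<p+\<delta>}"
    have m1: "max (- y t) \<epsilon> \<le> \<epsilon> + C * (t - p)" using low[of t] t C e by auto
    have m0: "max (- y t) \<epsilon> > 0" using e by auto
    have "qlo / (\<epsilon> + C * (t - p)) \<le> q t / max (- y t) \<epsilon>"
      using qb[of t] t qlo m0 m1 by (intro frac_le) auto
    then show "y' t \<ge> -C + qlo / (\<epsilon> + C * (t - p))" using yb2[OF t] by simp
  qed (use C e dl qlo yp p yc yd in \<open>auto intro: continuous_on_subset\<close>)
  then have "y (p + \<delta>) > C" using big e by simp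
  moreover have "y 1 \<ge> y (p + \<delta>) - C * (1 - (p + \<delta>))"
    by (rule lower_bound_from_derivative[where y'=y']) (use p dl yc yd yb1 in \<open>auto intro: continuous_on_subset\<close>)
  ultimately have "y 1 > C - C * (1 - (p + \<delta>))" by simp
  moreover have "C * (1 - (p + \<delta>)) \<le> C" using C p dl by (simp add: mult_left_le)
  ultimately show False using y1 by simp
qed

section \<open>Monotone Picard iteration\<close>

locale monotone_lipschitz_rhs =
  fixes F :: "real \<Rightarrow> real \<Rightarrow> real" and B L :: real
  assumes continuous_on_rhs: "\<And>u. continuous_on {0..1} u \<Longrightarrow> continuous_on {0..1} (\<lambda>x. F x (u x))"
    and rhs_bounded: "\<And>x y. x \<in> {0..1} \<Longrightarrow> \<bar>F x y\<bar> \<le> B"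
    and rhs_mono: "\<And>x y1 y2. x \<in> {0..1} \<Longrightarrow> y1 \<le> y2 \<Longrightarrow> F x y1 \<le> F x y2"
    and rhs_lipschitz: "\<And>x y1 y2. x \<in> {0..1} \<Longrightarrow> \<bar>F x y1 - F x y2\<bar> \<le> L * \<bar>y1 - y2\<bar>"
begin

lemma bound_nonneg: "B \<ge> 0"
  using rhs_bounded[of 0 0] by auto

lemma integrable_rhs:
  "continuous_on {0..1} u \<Longrightarrow> x \<in> {0..1} \<Longrightarrow> (\<lambda>s. F s (u s)) integrable_on {0..x}"
  by (intro integrable_continuous_real continuous_on_subset[OF continuous_on_rhs]) auto

lemma integral_rhs_bound:
  assumes "continuous_on {0..1} u" "x \<in> {0..1}"
  shows "\<bar>integral {0..x} (\<lambda>s. F s (u s))\<bar> \<le> B * x"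
proof -
  have "norm (integral {0..x} (\<lambda>s. F s (u s))) \<le> B * (x - 0)"
    by (rule integral_bound) (use assms rhs_bounded in \<open>auto intro: continuous_on_subset[OF continuous_on_rhs]\<close>)
  then show ?thesis by simp
qed

lemma integral_rhs_mono:
  assumes "continuous_on {0..1} u" "continuous_on {0..1} v" "x \<in> {0..1}"
    and "\<And>s. s \<in> {0..x} \<Longrightarrow> u s \<le> v s"
  shows "integral {0..x} (\<lambda>s. F s (u s)) \<le> integral {0..x} (\<lambda>s. F s (v s))"
  using assms by (intro integral_le integrable_rhs rhs_mono) auto

text \<open>Monotone Picard iteration, started from the subsolution \<open>x \<mapsto> a - B x\<close>.\<close>
primrec picard_iter :: "real \<Rightarrow> nat \<Rightarrow> real \<Rightarrow> real" where
  "picard_iter a 0 = (\<lambda>x. a - B * x)"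
| "picard_iter a (Suc n) = (\<lambda>x. a + integral {0..x} (\<lambda>s. F s (picard_iter a n s)))"

definition picard_limit :: "real \<Rightarrow> real \<Rightarrow> real" where
  "picard_limit a x = (SUP n. picard_iter a n x)"

lemma picard_iter_continuous: "continuous_on {0..1} (picard_iter a n)"
proof (induction n)
  case (Suc n)
  have "continuous_on {0..1} (\<lambda>x. integral {0..x} (\<lambda>s. F s (picard_iter a n s)))"
    by (intro indefinite_integral_continuous_1 integrable_continuous_real continuous_on_rhs Suc)
  then show ?case by (auto intro!: continuous_intros)
qed (auto intro!: continuous_intros)

lemma picard_iter_bounds:
  assumes "x \<in> {0..1}"
  shows "a - B * x \<le> picard_iter a n x \<and> picard_iter a n x \<le> a + B * x"
proof (cases n)
  case (Suc m)
  then show ?thesis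
    using integral_rhs_bound[OF picard_iter_continuous assms, of a m] by (auto simp: abs_le_iff)
qed (use assms bound_nonneg in auto)

lemma picard_iter_mono_init:
  assumes "a \<le> a'" "x \<in> {0..1}"
  shows "picard_iter a n x \<le> picard_iter a' n x"
  using assms(2)
proof (induction n arbitrary: x)
  case (Suc n)
  have "integral {0..x} (\<lambda>s. F s (picard_iter a n s)) \<le> integral {0..x} (\<lambda>s. F s (picard_iter a' n s))"
    by (rule integral_rhs_mono[OF picard_iter_continuous picard_iter_continuous Suc.prems]) (use Suc in auto)
  then show ?case using assms(1) by simp
qed (use assms in auto)

lemma picard_iter_Suc_ge:
  assumes "x \<in> {0..1}"
  shows "picard_iter a n x \<le> picard_iter a (Suc n) x"
  using assms
proof (induction n arbitrary: x)
  case 0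
  then show ?case using picard_iter_bounds[of x a 1] by auto
next
  case (Suc n)
  have "integral {0..x} (\<lambda>s. F s (picard_iter a n s)) \<le> integral {0..x} (\<lambda>s. F s (picard_iter a (Suc n) s))"
    by (rule integral_rhs_mono[OF picard_iter_continuous picard_iter_continuous Suc.prems]) (use Suc in auto)
  then show ?case by simp
qed

lemma picard_iter_tendsto:
  assumes x: "x \<in> {0..1}"
  shows "(\<lambda>n. picard_iter a n x) \<longlonglongrightarrow> picard_limit a x"
  unfolding picard_limit_def
proof (rule LIMSEQ_incseq_SUP)
  show "bdd_above (range (\<lambda>n. picard_iter a n x))"
    using picard_iter_bounds[OF x] by (intro bdd_aboveI[of _ "a + B * x"]) auto
  show "incseq (\<lambda>n. picard_iter a n x)"
    using picard_iter_Suc_ge[OF x] by (intro incseq_SucI) auto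
qed

lemma rhs_tendsto:
  assumes s: "s \<in> {0..1}" and lim: "X \<longlonglongrightarrow> l"
  shows "(\<lambda>n. F s (X n)) \<longlonglongrightarrow> F s l"
proof -
  have "(\<lambda>n. L * \<bar>X n - l\<bar>) \<longlonglongrightarrow> L * \<bar>l - l\<bar>"
    using lim by (intro tendsto_intros)
  then have "(\<lambda>n. L * \<bar>X n - l\<bar>) \<longlonglongrightarrow> 0" by simp
  then have "(\<lambda>n. F s (X n) - F s l) \<longlonglongrightarrow> 0"
    by (rule Lim_null_comparison[rotated]) (use rhs_lipschitz[OF s] in auto)
  then show ?thesis by (simp add: LIM_zero_iff)
qed

lemma picard_limit_integral_eq:
  shows "\<And>x. x \<in> {0..1} \<Longrightarrow> picard_limit a x = a + integral {0..x} (\<lambda>s. F s (picard_limit a s))"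
    and "continuous_on {0..1} (picard_limit a)"
proof -
  have "picard_iter a n 0 = a" for n by (cases n) auto
  then have a0: "picard_limit a 0 = a"
    using picard_iter_tendsto[of 0 a] by (simp add: LIMSEQ_const_iff)
  have eq: "picard_iter a (Suc n) x = picard_iter a (Suc n) 0 + integral {0..x} (\<lambda>s. F s (picard_iter a n s))"
    for n x by simp
  have lim: "(\<lambda>n. picard_iter a (Suc n) x) \<longlonglongrightarrow> picard_limit a x" if "x \<in> {0..1}" for x
    using picard_iter_tendsto[OF that] by (rule LIMSEQ_Suc)
  have rhs_lim: "(\<lambda>n. F x (picard_iter a n x)) \<longlonglongrightarrow> F x (picard_limit a x)" if "x \<in> {0..1}" for x
    using that picard_iter_tendsto[OF that] by (rule rhs_tendsto)
  note limit = integral_equation_limit[where u="\<lambda>n. picard_iter a (Suc n)" and U="picard_limit a",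
      OF zero_le_one eq continuous_on_rhs[OF picard_iter_continuous] rhs_bounded lim rhs_lim]
  show "\<And>x. x \<in> {0..1} \<Longrightarrow> picard_limit a x = a + integral {0..x} (\<lambda>s. F s (picard_limit a s))"
    using limit(1) a0 by simp
  show "continuous_on {0..1} (picard_limit a)"
    using limit(2) by (auto intro: lipschitz_on_continuous_on)
qed

lemma picard_limit_deriv:
  assumes "x \<in> {0<..<1}"
  shows "(picard_limit a has_real_derivative F x (picard_limit a x)) (at x)"
proof (rule has_real_derivative_of_integral_eq[where a=0 and b=1])
  show "continuous_on {0..1} (\<lambda>s. F s (picard_limit a s))"
    by (rule continuous_on_rhs[OF picard_limit_integral_eq(2)])
  fix y :: real assume "y \<in> {0..1}"
  then show "picard_limit a y = picard_limit a 0 + integral {0..y} (\<lambda>s. F s (picard_limit a s))"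
    using picard_limit_integral_eq(1)[of y] picard_limit_integral_eq(1)[of 0] by simp
qed (use assms in auto)

lemma picard_limit_mono_init:
  assumes "a \<le> a'" "x \<in> {0..1}"
  shows "picard_limit a x \<le> picard_limit a' x"
  by (rule LIMSEQ_le[OF picard_iter_tendsto[OF assms(2)] picard_iter_tendsto[OF assms(2)]])
    (use picard_iter_mono_init[OF assms] in auto)

lemma picard_limit_bounds:
  assumes x: "x \<in> {0..1}"
  shows "a - B * x \<le> picard_limit a x" "picard_limit a x \<le> a + B * x"
  using picard_iter_bounds[OF x]
  by (auto intro: LIMSEQ_le_const[OF picard_iter_tendsto[OF x]] LIMSEQ_le_const2[OF picard_iter_tendsto[OF x]])

lemma picard_limit_end_lipschitz:
  assumes "a \<le> a'"
  shows "picard_limit a' 1 - picard_limit a 1 \<le> (a' - a) * exp L"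
proof -
  define w where "w t = picard_limit a' t - picard_limit a t" for t
  define V where "V t = w t * exp (- L * t)" for t
  have "V 1 \<le> V 0"
  proof (rule DERIV_nonpos_imp_decreasing_open[of 0 1 V])
    fix t :: real assume t: "0 < t" "t < 1"
    have "F t (picard_limit a' t) - F t (picard_limit a t) \<le> L * w t"
      using rhs_lipschitz[of t "picard_limit a' t" "picard_limit a t"] picard_limit_mono_init[OF assms, of t] t
      unfolding w_def by auto
    moreover have "(V has_real_derivative (F t (picard_limit a' t) - F t (picard_limit a t) - L * w t) * exp (- L * t)) (at t)"
      unfolding V_def w_def using picard_limit_deriv[of t a] picard_limit_deriv[of t a'] t
      by (auto intro!: derivative_eq_intros simp: algebra_simps)
    ultimately show "\<exists>z. (V has_real_derivative z) (at t) \<and> z \<le> 0"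
      by (metis diff_le_0_iff_le exp_gt_zero less_le_not_le mult_le_0_iff)
  qed (auto simp: V_def w_def intro!: continuous_intros picard_limit_integral_eq(2))
  moreover have "w 0 = a' - a"
    unfolding w_def using picard_limit_integral_eq(1)[of 0 a] picard_limit_integral_eq(1)[of 0 a'] by simp
  ultimately have "w 1 * exp (- L) \<le> a' - a" unfolding V_def by simp
  then show ?thesis unfolding w_def by (simp add: exp_minus field_simps)
qed

text \<open>Shooting: the end value \<open>picard_limit a 1\<close> depends continuously on \<open>a\<close> and moves
  across \<open>v\<close> as \<open>a\<close> runs through \<open>[v - B, v + B]\<close>.\<close>
lemma exists_solution_with_end_value:
  "\<exists>z. continuous_on {0..1} z \<and> (\<forall>x\<in>{0<..<1}. (z has_real_derivative F x (z x)) (at x)) \<and> z 1 = v"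
proof -
  define g where "g a = picard_limit a 1" for a
  have "(exp L)-lipschitz_on {v - B .. v + B} g"
  proof (rule lipschitz_on_leI)
    fix x y :: real assume "x \<le> y"
    then show "dist (g x) (g y) \<le> exp L * dist x y"
      using picard_limit_end_lipschitz[of x y] picard_limit_mono_init[of x y 1]
      unfolding g_def by (simp add: dist_real_def abs_if algebra_simps)
  qed simp
  then have "continuous_on {v - B .. v + B} g" by (rule lipschitz_on_continuous_on)
  moreover have "g (v - B) \<le> v" "v \<le> g (v + B)"
    using picard_limit_bounds[of 1 "v - B"] picard_limit_bounds[of 1 "v + B"] unfolding g_def by auto
  ultimately obtain a where "g a = v" using IVT'[of g "v - B" v "v + B"] bound_nonneg by auto
  then show ?thesis using picard_limit_integral_eq(2)[of a] picard_limit_deriv[of _ a] unfolding g_def by blast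
qed

end

section \<open>The singular equation\<close>

locale singular_ode =
  fixes h q :: "real \<Rightarrow> real"
  assumes h_cont: "continuous_on {0..1} h" and q_cont: "continuous_on {0..1} q"
    and q_pos: "\<And>x. x \<in> {0<..<1} \<Longrightarrow> q x > 0" and q_0: "q 0 = 0" and q_1: "q 1 = 0"
begin

lemma q_nonneg: "x \<in> {0..1} \<Longrightarrow> q x \<ge> 0"
  using q_pos[of x] q_0 q_1 by (cases "x = 0 \<or> x = 1") auto

definition h_bound :: real where "h_bound = (SOME H. \<forall>x\<in>{0..1}. \<bar>h x\<bar> \<le> H)"
definition q_bound :: real where "q_bound = (SOME H. \<forall>x\<in>{0..1}. \<bar>q x\<bar> \<le> H)"

lemma abs_h_le: "x \<in> {0..1} \<Longrightarrow> \<bar>h x\<bar> \<le> h_bound"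
  using someI_ex[OF bounded_on_Icc[OF h_cont]] unfolding h_bound_def by blast

lemma q_le: "x \<in> {0..1} \<Longrightarrow> q x \<le> q_bound"
  using someI_ex[OF bounded_on_Icc[OF q_cont]] unfolding q_bound_def by fastforce

lemma q_bound_pos: "q_bound > 0"
  using q_le[of "1/2"] q_pos[of "1/2"] by auto

lemma h_bound_nonneg: "h_bound \<ge> 0"
  using abs_h_le[of 0] by auto

lemma rhs_ge: "x \<in> {0..1} \<Longrightarrow> y < 0 \<Longrightarrow> h x - c - q x / y \<ge> - (h_bound + \<bar>c\<bar>)"
  using abs_h_le[of x] divide_nonneg_neg[OF q_nonneg, of x y] by (auto simp: abs_le_iff)

lemma rhs_abs_le:
  assumes x: "x \<in> {0..1}" and y: "y \<le> -\<eta>" and \<eta>: "\<eta> > 0"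
  shows "\<bar>h x - c - q x / y\<bar> \<le> h_bound + \<bar>c\<bar> + q_bound / \<eta>"
proof -
  have "\<bar>q x / y\<bar> = q x / \<bar>y\<bar>" using q_nonneg[OF x] by (simp add: abs_div_pos)
  also have "\<dots> \<le> q_bound / \<eta>" using q_nonneg[OF x] q_le[OF x] y \<eta> by (intro frac_le) auto
  finally show ?thesis
    using abs_h_le[OF x] abs_triangle_ineq4[of "h x - c"] abs_triangle_ineq4[of "h x" c] by linarith
qed

lemma solPI:
  assumes zc: "continuous_on {0..1} z" and z0: "z 0 = 0"
    and zn: "\<And>x. x \<in> {0<..<1} \<Longrightarrow> z x < 0"
    and zd: "\<And>x. x \<in> {0<..<1} \<Longrightarrow> (z has_real_derivative h x - c - q x / z x) (at x)"
  shows "solP h q c z"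
  unfolding solP_def
proof (intro conjI ballI)
  have "continuous_on {0<..<1} z" by (rule continuous_on_subset[OF zc]) auto
  moreover have "continuous_on {0<..<1} h" "continuous_on {0<..<1} q"
    by (auto intro: continuous_on_subset[OF h_cont] continuous_on_subset[OF q_cont])
  moreover have "z x \<noteq> 0" if "x \<in> {0<..<1}" for x using zn[OF that] by simp
  ultimately have "continuous_on {0<..<1} (\<lambda>x. h x - c - q x / z x)"
    by (intro continuous_intros) auto
  then show "continuous_on {0<..<1} (deriv z)"
    by (rule continuous_on_eq) (use zd in \<open>auto intro: DERIV_imp_deriv[symmetric]\<close>)
qed (use assms in auto)

lemma sol_end_nonpos:
  assumes sol: "solP h q c z"
  shows "z 1 \<le> 0"
proof -
  have "continuous_on {0..1} z" using sol by (simp add: solP_def)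
  then have "(z \<longlongrightarrow> z 1) (at_left 1)" by (rule continuous_on_Icc_at_leftD) simp
  moreover have "eventually (\<lambda>x. z x \<le> 0) (at_left 1)"
    using eventually_at_left_real[of 0 "1::real"]
    by (rule eventually_mono) (use sol in \<open>auto simp: solP_def less_imp_le\<close>)
  ultimately show ?thesis by (rule tendsto_upperbound) simp
qed

lemma sol_nonpos:
  assumes sol: "solP h q c z" and x: "x \<in> {0..1}"
  shows "z x \<le> 0"
proof -
  consider "x = 0" | "x \<in> {0<..<1}" | "x = 1" using x by fastforce
  then show ?thesis
    using sol sol_end_nonpos[OF sol] unfolding solP_def by cases (auto simp: less_imp_le)
qed

text \<open>Comparison principle: \<open>-q/z\<close> is increasing in \<open>z < 0\<close>, so once the solution for the
  smaller speed lies above the other one, the gap can only widen.\<close>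
lemma sol_gap_nondecreasing:
  assumes c12: "c1 \<le> c2" and z1: "solP h q c1 z1" and z2: "solP h q c2 z2"
    and t: "t \<in> {0<..<1}" and gt: "z1 t > z2 t"
  shows "z1 1 - z2 1 \<ge> z1 t - z2 t"
proof -
  have z1c: "continuous_on {0..1} z1" and z2c: "continuous_on {0..1} z2"
    and z1d: "\<And>x. x \<in> {0<..<1} \<Longrightarrow> (z1 has_real_derivative h x - c1 - q x / z1 x) (at x)"
    and z2d: "\<And>x. x \<in> {0<..<1} \<Longrightarrow> (z2 has_real_derivative h x - c2 - q x / z2 x) (at x)"
    and z1n: "\<And>x. x \<in> {0<..<1} \<Longrightarrow> z1 x < 0"
    using z1 z2 unfolding solP_def by auto
  have "(\<lambda>x. z1 x - z2 x) t \<le> (\<lambda>x. z1 x - z2 x) 1"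
  proof (rule nondecreasing_while_positive[where v="\<lambda>x. z1 x - z2 x" and v'="\<lambda>x. (h x - c1 - q x / z1 x) - (h x - c2 - q x / z2 x)"])
    show "continuous_on {t..1} (\<lambda>x. z1 x - z2 x)" using t
      by (intro continuous_intros continuous_on_subset[OF z1c] continuous_on_subset[OF z2c]) auto
  next
    fix x assume x: "x \<in> {t<..<1}"
    then have x01: "x \<in> {0<..<1}" using t by auto
    show "((\<lambda>x. z1 x - z2 x) has_real_derivative (h x - c1 - q x / z1 x) - (h x - c2 - q x / z2 x)) (at x)"
      using z1d[OF x01] z2d[OF x01] by (rule DERIV_diff)
    assume "z1 x - z2 x > 0"
    then have "inverse (z1 x) \<le> inverse (z2 x)" using z1n[OF x01] by (intro le_imp_inverse_le_neg) auto
    then have "q x * inverse (z1 x) \<le> q x * inverse (z2 x)"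
      using q_nonneg[of x] x01 by (intro mult_left_mono) auto
    then show "0 \<le> (h x - c1 - q x / z1 x) - (h x - c2 - q x / z2 x)"
      using c12 by (simp add: divide_inverse)
  qed (use t gt in auto)
  then show ?thesis by simp
qed

lemma sol_le_of_end_le:
  assumes c12: "c1 \<le> c2" and z1: "solP h q c1 z1" and z2: "solP h q c2 z2"
    and end_le: "z1 1 \<le> z2 1" and x: "x \<in> {0..1}"
  shows "z1 x \<le> z2 x"
proof (rule ccontr)
  assume gt: "\<not> z1 x \<le> z2 x"
  have "x \<noteq> 0" using gt z1 z2 unfolding solP_def by auto
  with x gt end_le have "x \<in> {0<..<1}" by (cases "x = 1") auto
  from sol_gap_nondecreasing[OF c12 z1 z2 this] gt end_le show False by linarith
qed

subsection \<open>Truncation and shooting\<close>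

definition trunc_rhs :: "real \<Rightarrow> real \<Rightarrow> real \<Rightarrow> real \<Rightarrow> real" where
  "trunc_rhs c \<epsilon> x y = h x - c - q x / min y (-\<epsilon>)"

lemma trunc_rhs_eq: "y \<le> -\<epsilon> \<Longrightarrow> trunc_rhs c \<epsilon> x y = h x - c - q x / y"
  unfolding trunc_rhs_def by (simp add: min_def)

lemma trunc_rhs_le:
  assumes "y < 0" "x \<in> {0..1}"
  shows "trunc_rhs c \<epsilon> x y \<le> h x - c - q x / y"
proof -
  have "inverse y \<le> inverse (min y (-\<epsilon>))" using assms by (intro le_imp_inverse_le_neg) auto
  then have "q x * inverse y \<le> q x * inverse (min y (-\<epsilon>))"
    using q_nonneg[OF assms(2)] by (intro mult_left_mono) auto
  then show ?thesis unfolding trunc_rhs_def by (simp add: divide_inverse)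
qed

lemma trunc_rhs_ge:
  assumes "x \<in> {0..1}"
  shows "trunc_rhs c \<epsilon> x y \<ge> - (h_bound + \<bar>c\<bar>) + q x / max (- y) \<epsilon>"
proof -
  have "min y (-\<epsilon>) = - max (- y) \<epsilon>" by (auto simp: min_def max_def)
  then show ?thesis using abs_h_le[OF assms] unfolding trunc_rhs_def by (auto simp: abs_le_iff)
qed

lemma monotone_lipschitz_rhs_trunc:
  assumes e: "\<epsilon> > 0"
  shows "monotone_lipschitz_rhs (trunc_rhs c \<epsilon>) (h_bound + \<bar>c\<bar> + q_bound / \<epsilon>) (q_bound / \<epsilon>\<^sup>2)"
proof
  fix u :: "real \<Rightarrow> real" assume u: "continuous_on {0..1} u"
  show "continuous_on {0..1} (\<lambda>x. trunc_rhs c \<epsilon> x (u x))"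
    unfolding trunc_rhs_def using e by (intro continuous_intros h_cont q_cont u) auto
next
  fix x y :: real assume "x \<in> {0..1}"
  then show "\<bar>trunc_rhs c \<epsilon> x y\<bar> \<le> h_bound + \<bar>c\<bar> + q_bound / \<epsilon>"
    unfolding trunc_rhs_def using e by (intro rhs_abs_le) auto
next
  fix x y1 y2 :: real assume x: "x \<in> {0..1}" and y: "y1 \<le> y2"
  have "inverse (min y2 (-\<epsilon>)) \<le> inverse (min y1 (-\<epsilon>))"
    using y e by (intro le_imp_inverse_le_neg) auto
  then have "q x * inverse (min y2 (-\<epsilon>)) \<le> q x * inverse (min y1 (-\<epsilon>))"
    using q_nonneg[OF x] by (intro mult_left_mono) auto
  then show "trunc_rhs c \<epsilon> x y1 \<le> trunc_rhs c \<epsilon> x y2" unfolding trunc_rhs_def by (simp add: divide_inverse)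
next
  fix x y1 y2 :: real assume x: "x \<in> {0..1}"
  have "\<bar>q x / min y2 (-\<epsilon>) - q x / min y1 (-\<epsilon>)\<bar> \<le> q x / \<epsilon>\<^sup>2 * \<bar>min y2 (-\<epsilon>) - min y1 (-\<epsilon>)\<bar>"
    by (rule inverse_lipschitz_below) (use e q_nonneg[OF x] in auto)
  also have "\<dots> \<le> q_bound / \<epsilon>\<^sup>2 * \<bar>y1 - y2\<bar>"
    using q_le[OF x] q_bound_pos e by (intro mult_mono divide_right_mono) (auto simp: min_def)
  finally show "\<bar>trunc_rhs c \<epsilon> x y1 - trunc_rhs c \<epsilon> x y2\<bar> \<le> q_bound / \<epsilon>\<^sup>2 * \<bar>y1 - y2\<bar>"
    unfolding trunc_rhs_def by (simp add: abs_minus_commute)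
qed

lemma uniform_escape:
  assumes ab: "0 < a" "a \<le> b" "b < 1" and C: "C > 0"
  obtains \<epsilon>0 where "0 < \<epsilon>0"
    "\<And>\<epsilon> y y' t. 0 < \<epsilon> \<Longrightarrow> \<epsilon> \<le> \<epsilon>0 \<Longrightarrow> t \<in> {a..b} \<Longrightarrow> continuous_on {t..1} y \<Longrightarrow>
      (\<And>s. s \<in> {t<..<1} \<Longrightarrow> (y has_real_derivative y' s) (at s)) \<Longrightarrow>
      (\<And>s. s \<in> {t<..<1} \<Longrightarrow> y' s \<ge> -C + q s / max (- y s) \<epsilon>) \<Longrightarrow> y 1 \<le> 0 \<Longrightarrow> y t < -\<epsilon>"
proof -
  define \<delta> where "\<delta> = (1 - b) / 2"
  have dl: "\<delta> > 0" "b + \<delta> < 1" using ab by (auto simp: \<delta>_def field_simps)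
  obtain s where s: "s \<in> {a..b+\<delta>}" "\<And>t. t \<in> {a..b+\<delta>} \<Longrightarrow> q s \<le> q t"
    using continuous_attains_inf[OF compact_Icc _ continuous_on_subset[OF q_cont, of "{a..b+\<delta>}"]] ab dl
    by auto
  have q0: "q s > 0" using s ab dl by (intro q_pos) auto
  obtain \<epsilon>0 where e0: "0 < \<epsilon>0" "\<epsilon>0 \<le> 1"
    "\<And>\<epsilon>. 0 < \<epsilon> \<Longrightarrow> \<epsilon> \<le> \<epsilon>0 \<Longrightarrow> (q s / C) * ln (1 + C * \<delta> / \<epsilon>) > 1 + C * \<delta> + C"
    using ln_large_near_zero[OF q0 C dl(1)] by metis
  show thesis
  proof (rule that[OF e0(1)])
    fix \<epsilon> y y' t assume e: "0 < \<epsilon>" "\<epsilon> \<le> \<epsilon>0" and t: "t \<in> {a..b}"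
      and yc: "continuous_on {t..1} y" and yd: "\<And>s. s \<in> {t<..<1} \<Longrightarrow> (y has_real_derivative y' s) (at s)"
      and yb: "\<And>s. s \<in> {t<..<1} \<Longrightarrow> y' s \<ge> -C + q s / max (- y s) \<epsilon>" and y1: "y 1 \<le> 0"
    have yb1: "y' u \<ge> -C" if u: "u \<in> {t<..<1}" for u
    proof -
      have "q u / max (- y u) \<epsilon> \<ge> 0" using q_nonneg[of u] u t ab e by auto
      then show ?thesis using yb[OF u] by linarith
    qed
    show "y t < -\<epsilon>"
    proof (rule below_level_of_log_drift[OF C e(1) _ dl(1) _ _ q0 e0(3)[OF e] yc yd yb1 _ _ y1])
      show "\<epsilon> \<le> 1" "0 \<le> t" "t + \<delta> \<le> 1" using e e0 t ab dl by auto
      show "y' u \<ge> -C + q u / max (- y u) \<epsilon>" if "u \<in> {t<..<t + \<delta>}" for u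
        using that t dl by (intro yb) auto
      show "\<And>u. u \<in> {t..t + \<delta>} \<Longrightarrow> q u \<ge> q s" using s t by auto
    qed
  qed
qed

lemma sol_uniformly_negative:
  assumes ab: "0 < a" "a \<le> b" "b < 1"
  obtains \<eta> where "\<eta> > 0" "\<And>c y t. \<bar>c\<bar> \<le> K \<Longrightarrow> solP h q c y \<Longrightarrow> t \<in> {a..b} \<Longrightarrow> y t < -\<eta>"
proof -
  define C where "C = h_bound + \<bar>K\<bar> + 1"
  have C: "C > 0" using h_bound_nonneg by (simp add: C_def add_nonneg_pos)
  obtain \<epsilon>0 where e0: "0 < \<epsilon>0"
    "\<And>\<epsilon> y y' t. 0 < \<epsilon> \<Longrightarrow> \<epsilon> \<le> \<epsilon>0 \<Longrightarrow> t \<in> {a..b} \<Longrightarrow> continuous_on {t..1} y \<Longrightarrow>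
      (\<And>s. s \<in> {t<..<1} \<Longrightarrow> (y has_real_derivative y' s) (at s)) \<Longrightarrow>
      (\<And>s. s \<in> {t<..<1} \<Longrightarrow> y' s \<ge> -C + q s / max (- y s) \<epsilon>) \<Longrightarrow> y 1 \<le> 0 \<Longrightarrow> y t < -\<epsilon>"
    using uniform_escape[OF ab C] by metis
  show thesis
  proof (rule that[OF e0(1)])
    fix c y t assume c: "\<bar>c\<bar> \<le> K" and sol: "solP h q c y" and t: "t \<in> {a..b}"
    show "y t < -\<epsilon>0"
    proof (rule e0(2)[OF e0(1) order_refl t])
      show "continuous_on {t..1} y" using sol t ab by (auto simp: solP_def intro: continuous_on_subset)
      show "y 1 \<le> 0" by (rule sol_end_nonpos[OF sol])
    next
      fix s assume s: "s \<in> {t<..<1}"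
      then have s01: "s \<in> {0<..<1}" using t ab by auto
      show "(y has_real_derivative h s - c - q s / y s) (at s)" using sol s01 by (auto simp: solP_def)
      have ys: "y s < 0" using sol s01 by (auto simp: solP_def)
      have "q s / max (- y s) \<epsilon>0 \<le> q s / (- y s)"
        using q_nonneg[of s] ys s01 e0(1) by (intro divide_left_mono) (auto intro!: mult_pos_neg)
      then show "h s - c - q s / y s \<ge> -C + q s / max (- y s) \<epsilon>0"
        using rhs_ge[of s "y s" c] abs_h_le[of s] c s01 unfolding C_def by (auto simp: abs_le_iff)
    qed
  qed
qed

lemma sol_integral_eq:
  assumes sol: "solP h q c y" and t: "{a..t} \<subseteq> {0<..<1}" "a \<le> t"
  shows "y t = y a + integral {a..t} (\<lambda>s. h s - c - q s / y s)"
proof -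
  have "integral {a..t} (\<lambda>s. h s - c - q s / y s) = y t - y a"
    by (rule integral_eq_diff_of_derivative) (use sol t in \<open>auto simp: solP_def\<close>)
  then show ?thesis by simp
qed

text \<open>Where the solutions are uniformly negative, their right-hand sides are uniformly bounded,
  so the integral equations pass to the limit.\<close>
lemma sol_limit_on_Icc:
  fixes Y :: "nat \<Rightarrow> real \<Rightarrow> real" and cs :: "nat \<Rightarrow> real"
  assumes sol: "\<And>n. solP h q (cs n) (Y n)" and cs: "cs \<longlonglongrightarrow> c" "\<And>n. \<bar>cs n\<bar> \<le> K"
    and ab: "a \<le> b" "{a..b} \<subseteq> {0<..<1}" and \<eta>: "\<eta> > 0" and Yn: "\<And>n t. t \<in> {a..b} \<Longrightarrow> Y n t \<le> -\<eta>"
    and lim: "\<And>t. t \<in> {a..b} \<Longrightarrow> (\<lambda>n. Y n t) \<longlonglongrightarrow> Z t" and x: "x \<in> {a<..<b}"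
  shows "(Z has_real_derivative h x - c - q x / Z x) (at x)"
proof -
  have Zn: "Z t \<le> -\<eta>" if "t \<in> {a..b}" for t
    by (rule LIMSEQ_le_const2[OF lim[OF that]]) (use Yn that in auto)
  define k where "k n s = h s - cs n - q s / Y n s" for n s
  define G where "G s = h s - c - q s / Z s" for s
  have sub: "{a..b} \<subseteq> {0..1}" using ab by auto
  have "continuous_on {a..b} (Y n)" for n
    using sol[of n] sub by (auto simp: solP_def intro: continuous_on_subset)
  then have kc: "continuous_on {a..b} (k n)" for n
    unfolding k_def using Yn[of _ n] \<eta>
    by (intro continuous_intros continuous_on_subset[OF h_cont sub] continuous_on_subset[OF q_cont sub]) force+
  have kB: "\<bar>k n s\<bar> \<le> h_bound + K + q_bound / \<eta>" if "s \<in> {a..b}" for n s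
  proof -
    have "\<bar>k n s\<bar> \<le> h_bound + \<bar>cs n\<bar> + q_bound / \<eta>"
      unfolding k_def using that sub Yn[OF that] \<eta> by (intro rhs_abs_le) auto
    then show ?thesis using cs(2)[of n] by linarith
  qed
  have keq: "Y n t = Y n a + integral {a..t} (k n)" if "t \<in> {a..b}" for n t
  proof -
    have "{a..t} \<subseteq> {0<..<1}" using that ab by auto
    then show ?thesis using sol_integral_eq[OF sol] that unfolding k_def by auto
  qed
  have kG: "(\<lambda>n. k n t) \<longlonglongrightarrow> G t" if "t \<in> {a..b}" for t
    unfolding k_def G_def using lim[OF that] cs(1) Zn[OF that] \<eta> by (intro tendsto_intros) auto
  note limit = integral_equation_limit[OF ab(1) keq kc kB lim kG]
  have "continuous_on {a..b} Z" using limit(2) by (rule lipschitz_on_continuous_on)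
  moreover have "Z t \<noteq> 0" if "t \<in> {a..b}" for t using Zn[OF that] \<eta> by linarith
  ultimately have "continuous_on {a..b} G"
    unfolding G_def
    by (intro continuous_intros continuous_on_subset[OF h_cont sub] continuous_on_subset[OF q_cont sub]) auto
  from has_real_derivative_of_integral_eq[OF this limit(1) x]
  show ?thesis by (simp add: G_def)
qed

lemma sol_limit:
  fixes Y :: "nat \<Rightarrow> real \<Rightarrow> real" and cs :: "nat \<Rightarrow> real"
  assumes sol: "\<And>n. solP h q (cs n) (Y n)" and cs: "cs \<longlonglongrightarrow> c" "\<And>n. \<bar>cs n\<bar> \<le> K"
    and lim: "\<And>x. x \<in> {0<..<1} \<Longrightarrow> (\<lambda>n. Y n x) \<longlonglongrightarrow> Z x"
    and x: "x \<in> {0<..<1}"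
  shows "Z x < 0" "(Z has_real_derivative h x - c - q x / Z x) (at x)"
proof -
  define a b where "a = x / 2" and "b = (1 + x) / 2"
  have ab: "0 < a" "a \<le> b" "b < 1" "x \<in> {a<..<b}" and sub: "{a..b} \<subseteq> {0<..<1}"
    using x by (auto simp: a_def b_def)
  obtain \<eta> where \<eta>: "\<eta> > 0" "\<And>c y t. \<bar>c\<bar> \<le> K \<Longrightarrow> solP h q c y \<Longrightarrow> t \<in> {a..b} \<Longrightarrow> y t < -\<eta>"
    using sol_uniformly_negative[OF ab(1-3)] by metis
  have Yn: "Y n t \<le> -\<eta>" if "t \<in> {a..b}" for n t using \<eta>(2)[OF cs(2)[of n] sol[of n] that] by simp
  have lim': "(\<lambda>n. Y n t) \<longlonglongrightarrow> Z t" if "t \<in> {a..b}" for t using lim that sub by auto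
  show "(Z has_real_derivative h x - c - q x / Z x) (at x)"
    by (rule sol_limit_on_Icc[OF sol cs ab(2) sub \<eta>(1) Yn lim' ab(4)])
  have "Z x \<le> -\<eta>" using ab by (intro LIMSEQ_le_const2[OF lim'] Yn exI[of _ 0] allI impI) auto
  then show "Z x < 0" using \<eta>(1) by simp
qed

definition trunc_sol :: "real \<Rightarrow> real \<Rightarrow> real \<Rightarrow> real \<Rightarrow> real" where
  "trunc_sol c \<epsilon> m = (SOME z. continuous_on {0..1} z \<and>
     (\<forall>x\<in>{0<..<1}. (z has_real_derivative trunc_rhs c \<epsilon> x (z x)) (at x)) \<and> z 1 = -m)"

lemma trunc_sol:
  assumes "\<epsilon> > 0"
  shows "continuous_on {0..1} (trunc_sol c \<epsilon> m)"
    and "\<And>x. x \<in> {0<..<1} \<Longrightarrow> (trunc_sol c \<epsilon> m has_real_derivative trunc_rhs c \<epsilon> x (trunc_sol c \<epsilon> m x)) (at x)"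
    and "trunc_sol c \<epsilon> m 1 = -m"
  using someI_ex[OF monotone_lipschitz_rhs.exists_solution_with_end_value[OF monotone_lipschitz_rhs_trunc[OF assms], of c "-m"]]
  unfolding trunc_sol_def by auto

lemma trunc_sol_le_near_end:
  assumes e: "\<epsilon> > 0" and t: "t \<in> {0..1}"
  shows "trunc_sol c \<epsilon> m t \<le> - m + (h_bound + \<bar>c\<bar>) * (1 - t)"
proof -
  note Y = trunc_sol[OF e, where c=c and m=m]
  have "trunc_sol c \<epsilon> m 1 \<ge> trunc_sol c \<epsilon> m t - (h_bound + \<bar>c\<bar>) * (1 - t)"
  proof (rule lower_bound_from_derivative[where y="trunc_sol c \<epsilon> m" and y'="\<lambda>s. trunc_rhs c \<epsilon> s (trunc_sol c \<epsilon> m s)"])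
    show "continuous_on {t..1} (trunc_sol c \<epsilon> m)" using t by (intro continuous_on_subset[OF Y(1)]) auto
  next
    fix s assume "s \<in> {t<..<1}"
    then have s: "s \<in> {0<..<1}" using t by auto
    then show "(trunc_sol c \<epsilon> m has_real_derivative trunc_rhs c \<epsilon> s (trunc_sol c \<epsilon> m s)) (at s)"
      by (rule Y(2))
    have "q s / max (- trunc_sol c \<epsilon> m s) \<epsilon> \<ge> 0" using q_nonneg[of s] s e by auto
    then show "trunc_rhs c \<epsilon> s (trunc_sol c \<epsilon> m s) \<ge> - (h_bound + \<bar>c\<bar>)"
      using trunc_rhs_ge[where x=s and c=c and \<epsilon>=\<epsilon> and y="trunc_sol c \<epsilon> m s"] s by auto
  qed (use t in auto)
  then show ?thesis using Y(3) by simp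
qed

lemma trunc_sol_below:
  assumes \<phi>: "\<phi> \<in> {0<..<1}" and m: "m > 0"
  shows "\<exists>\<epsilon>0>0. \<forall>\<epsilon>. 0 < \<epsilon> \<longrightarrow> \<epsilon> \<le> \<epsilon>0 \<longrightarrow> (\<forall>t\<in>{\<phi>..1}. trunc_sol c \<epsilon> m t < -\<epsilon>)"
proof -
  define C where "C = h_bound + \<bar>c\<bar> + 1"
  have C: "C > 0" using h_bound_nonneg by (simp add: C_def add_nonneg_pos)
  define b where "b = max \<phi> (1 - m / (2 * C))"
  have b: "\<phi> \<le> b" "b < 1" using \<phi> m C by (auto simp: b_def)
  obtain \<epsilon>1 where e1: "0 < \<epsilon>1"
    "\<And>\<epsilon> y y' t. 0 < \<epsilon> \<Longrightarrow> \<epsilon> \<le> \<epsilon>1 \<Longrightarrow> t \<in> {\<phi>..b} \<Longrightarrow> continuous_on {t..1} y \<Longrightarrow>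
      (\<And>s. s \<in> {t<..<1} \<Longrightarrow> (y has_real_derivative y' s) (at s)) \<Longrightarrow>
      (\<And>s. s \<in> {t<..<1} \<Longrightarrow> y' s \<ge> -C + q s / max (- y s) \<epsilon>) \<Longrightarrow> y 1 \<le> 0 \<Longrightarrow> y t < -\<epsilon>"
    by (rule uniform_escape[of \<phi> b C]) (use \<phi> b C in auto)
  show ?thesis
  proof (intro exI[of _ "min \<epsilon>1 (m / 2)"] conjI allI impI ballI)
    show "min \<epsilon>1 (m / 2) > 0" using e1 m by auto
    fix \<epsilon> t assume e: "0 < \<epsilon>" "\<epsilon> \<le> min \<epsilon>1 (m / 2)" and t: "t \<in> {\<phi>..1}"
    note Y = trunc_sol[OF e(1), where c=c and m=m]
    show "trunc_sol c \<epsilon> m t < -\<epsilon>"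
    proof (cases "t \<le> b")
      case True
      have slope: "trunc_rhs c \<epsilon> s (trunc_sol c \<epsilon> m s) \<ge> -C + q s / max (- trunc_sol c \<epsilon> m s) \<epsilon>"
        if "s \<in> {0..1}" for s
        using trunc_rhs_ge[OF that, where c=c and \<epsilon>=\<epsilon> and y="trunc_sol c \<epsilon> m s"] unfolding C_def by linarith
      show ?thesis
      proof (rule e1(2)[where y="trunc_sol c \<epsilon> m" and y'="\<lambda>s. trunc_rhs c \<epsilon> s (trunc_sol c \<epsilon> m s)"])
        show "continuous_on {t..1} (trunc_sol c \<epsilon> m)" using t \<phi> by (intro continuous_on_subset[OF Y(1)]) auto
      qed (use e t True \<phi> Y(2,3) slope m in auto)
    next
      case False
      then have "1 - t < m / (2 * C)" by (simp add: b_def)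
      then have "C * (1 - t) < m / 2" using C by (simp add: field_simps)
      moreover have "(h_bound + \<bar>c\<bar>) * (1 - t) \<le> C * (1 - t)" using t by (intro mult_right_mono) (auto simp: C_def)
      ultimately show ?thesis using trunc_sol_le_near_end[OF e(1), of t c m] t \<phi> e by auto
    qed
  qed
qed

text \<open>Where both truncations are inactive, the two truncated solutions solve the same
  locally Lipschitz equation with the same end value.\<close>
lemma trunc_sol_eq:
  assumes \<phi>: "\<phi> \<in> {0<..<1}" and e: "0 < \<epsilon>1" "0 < \<epsilon>2"
    and below1: "\<And>t. t \<in> {\<phi>..1} \<Longrightarrow> trunc_sol c \<epsilon>1 m t < -\<epsilon>1"
    and below2: "\<And>t. t \<in> {\<phi>..1} \<Longrightarrow> trunc_sol c \<epsilon>2 m t < -\<epsilon>2"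
    and t: "t \<in> {\<phi>..1}"
  shows "trunc_sol c \<epsilon>1 m t = trunc_sol c \<epsilon>2 m t"
proof -
  define e where "e = min \<epsilon>1 \<epsilon>2"
  have e0: "e > 0" using e by (simp add: e_def)
  note Y1 = trunc_sol[OF e(1), where c=c and m=m] and Y2 = trunc_sol[OF e(2), where c=c and m=m]
  have "(\<lambda>x. trunc_sol c \<epsilon>1 m x - trunc_sol c \<epsilon>2 m x) t = 0"
  proof (rule zero_backward_of_lipschitz_derivative[where a=\<phi> and b=1 and L="q_bound / e\<^sup>2"
        and w="\<lambda>x. trunc_sol c \<epsilon>1 m x - trunc_sol c \<epsilon>2 m x"
        and w'="\<lambda>x. trunc_rhs c \<epsilon>1 x (trunc_sol c \<epsilon>1 m x) - trunc_rhs c \<epsilon>2 x (trunc_sol c \<epsilon>2 m x)"])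
    show "continuous_on {\<phi>..1} (\<lambda>x. trunc_sol c \<epsilon>1 m x - trunc_sol c \<epsilon>2 m x)"
      using \<phi> by (intro continuous_intros continuous_on_subset[OF Y1(1)] continuous_on_subset[OF Y2(1)]) auto
  next
    fix x assume x: "x \<in> {\<phi><..<1}"
    then have x01: "x \<in> {0<..<1}" using \<phi> by auto
    show "((\<lambda>x. trunc_sol c \<epsilon>1 m x - trunc_sol c \<epsilon>2 m x) has_real_derivative
        trunc_rhs c \<epsilon>1 x (trunc_sol c \<epsilon>1 m x) - trunc_rhs c \<epsilon>2 x (trunc_sol c \<epsilon>2 m x)) (at x)"
      using Y1(2)[OF x01] Y2(2)[OF x01] by (rule DERIV_diff)
    have b1: "trunc_sol c \<epsilon>1 m x < -\<epsilon>1" and b2: "trunc_sol c \<epsilon>2 m x < -\<epsilon>2" using below1 below2 x by auto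
    then have "trunc_rhs c \<epsilon>1 x (trunc_sol c \<epsilon>1 m x) - trunc_rhs c \<epsilon>2 x (trunc_sol c \<epsilon>2 m x)
        = q x / trunc_sol c \<epsilon>2 m x - q x / trunc_sol c \<epsilon>1 m x"
      by (simp add: trunc_rhs_eq less_imp_le)
    also have "\<bar>\<dots>\<bar> \<le> q x / e\<^sup>2 * \<bar>trunc_sol c \<epsilon>2 m x - trunc_sol c \<epsilon>1 m x\<bar>"
      using b1 b2 e0 q_nonneg[of x] x01 by (intro inverse_lipschitz_below) (auto simp: e_def)
    also have "\<dots> \<le> q_bound / e\<^sup>2 * \<bar>trunc_sol c \<epsilon>1 m x - trunc_sol c \<epsilon>2 m x\<bar>"
      using q_le[of x] x01 by (auto intro!: mult_right_mono divide_right_mono simp: abs_minus_commute)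
    finally show "\<bar>trunc_rhs c \<epsilon>1 x (trunc_sol c \<epsilon>1 m x) - trunc_rhs c \<epsilon>2 x (trunc_sol c \<epsilon>2 m x)\<bar>
        \<le> q_bound / e\<^sup>2 * \<bar>trunc_sol c \<epsilon>1 m x - trunc_sol c \<epsilon>2 m x\<bar>" .
  qed (use t Y1(3) Y2(3) in auto)
  then show ?thesis by simp
qed

definition untrunc_eps :: "real \<Rightarrow> real \<Rightarrow> real \<Rightarrow> real" where
  "untrunc_eps c m \<phi> =
     (SOME \<epsilon>0. \<epsilon>0 > 0 \<and> (\<forall>\<epsilon>. 0 < \<epsilon> \<longrightarrow> \<epsilon> \<le> \<epsilon>0 \<longrightarrow> (\<forall>t\<in>{\<phi>..1}. trunc_sol c \<epsilon> m t < -\<epsilon>)))"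

lemma untrunc_eps:
  assumes "\<phi> \<in> {0<..<1}" "m > 0"
  shows "untrunc_eps c m \<phi> > 0"
    and "\<And>\<epsilon> t. 0 < \<epsilon> \<Longrightarrow> \<epsilon> \<le> untrunc_eps c m \<phi> \<Longrightarrow> t \<in> {\<phi>..1} \<Longrightarrow> trunc_sol c \<epsilon> m t < -\<epsilon>"
  using someI_ex[OF trunc_sol_below[OF assms, of c]] unfolding untrunc_eps_def[symmetric] by auto

text \<open>The solution of the untruncated equation with end value \<open>-m\<close>: at \<open>x\<close> it is read off a truncated
  solution whose truncation is inactive on \<open>[x, 1]\<close>, so by \<open>trunc_sol_eq\<close> the choice does not matter.\<close>
definition shooting_sol :: "real \<Rightarrow> real \<Rightarrow> real \<Rightarrow> real" where
  "shooting_sol c m x = (if x \<le> 0 then 0 else if 1 \<le> x then -m else trunc_sol c (untrunc_eps c m x) m x)"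

lemma shooting_sol_eq:
  assumes \<phi>: "\<phi> \<in> {0<..<1}" and m: "m > 0" and t: "t \<in> {\<phi>..1}"
  shows "shooting_sol c m t = trunc_sol c (untrunc_eps c m \<phi>) m t"
proof (cases "t = 1")
  case True
  then show ?thesis using trunc_sol(3)[OF untrunc_eps(1)[OF \<phi> m, where c=c]] by (simp add: shooting_sol_def)
next
  case False
  then have t01: "t \<in> {0<..<1}" using t \<phi> by auto
  define e where "e = min (untrunc_eps c m t) (untrunc_eps c m \<phi>)"
  have e: "e > 0" using untrunc_eps(1)[OF t01 m, where c=c] untrunc_eps(1)[OF \<phi> m, where c=c] by (simp add: e_def)
  have "trunc_sol c (untrunc_eps c m t) m t = trunc_sol c e m t"
    using untrunc_eps[OF t01 m, where c=c] e t01 by (intro trunc_sol_eq[OF t01]) (auto simp: e_def)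
  also have "\<dots> = trunc_sol c (untrunc_eps c m \<phi>) m t"
    using untrunc_eps[OF \<phi> m, where c=c] e t by (intro trunc_sol_eq[OF \<phi>]) (auto simp: e_def)
  finally show ?thesis using t01 by (simp add: shooting_sol_def)
qed

lemma shooting_sol_neg:
  assumes x: "x \<in> {0<..<1}" and m: "m > 0"
  shows "shooting_sol c m x < 0"
  using shooting_sol_eq[OF x m, of x c] untrunc_eps[OF x m, where c=c] x by force

lemma shooting_sol_deriv:
  assumes x: "x \<in> {0<..<1}" and m: "m > 0"
  shows "(shooting_sol c m has_real_derivative h x - c - q x / shooting_sol c m x) (at x)"
proof -
  define \<phi> where "\<phi> = x / 2"
  have \<phi>: "\<phi> \<in> {0<..<1}" "x \<in> {\<phi><..<1}" using x by (auto simp: \<phi>_def)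
  define \<epsilon> where "\<epsilon> = untrunc_eps c m \<phi>"
  have e: "\<epsilon> > 0" using untrunc_eps(1)[OF \<phi>(1) m, where c=c] by (simp add: \<epsilon>_def)
  have "trunc_sol c \<epsilon> m x < -\<epsilon>" using untrunc_eps(2)[OF \<phi>(1) m, where c=c, OF e] \<phi>(2) by (simp add: \<epsilon>_def)
  then have "trunc_rhs c \<epsilon> x (trunc_sol c \<epsilon> m x) = h x - c - q x / shooting_sol c m x"
    using shooting_sol_eq[OF \<phi>(1) m, of x c] \<phi>(2) by (simp add: trunc_rhs_eq \<epsilon>_def)
  with trunc_sol(2)[OF e x, where c=c and m=m]
  have "(trunc_sol c \<epsilon> m has_real_derivative h x - c - q x / shooting_sol c m x) (at x)" by simp
  then show ?thesis
    by (rule has_field_derivative_transform_within_open[where S="{\<phi><..<1}"])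
      (use \<phi> shooting_sol_eq[OF \<phi>(1) m] in \<open>auto simp: \<epsilon>_def\<close>)
qed

text \<open>Solutions shot backwards from above \<open>\<beta> 1\<close> stay above \<open>\<beta>\<close>.\<close>
definition lower_barrier :: "real \<Rightarrow> (real \<Rightarrow> real) \<Rightarrow> bool" where
  "lower_barrier c \<beta> \<longleftrightarrow> continuous_on {0..1} \<beta> \<and> \<beta> 0 = 0 \<and> (\<forall>x\<in>{0<..1}. \<beta> x < 0) \<and>
     (\<forall>x\<in>{0<..<1}. \<exists>d. (\<beta> has_real_derivative d) (at x) \<and> d \<ge> h x - c - q x / \<beta> x)"

lemma trunc_sol_above_barrier:
  assumes b: "lower_barrier c \<beta>" and e: "\<epsilon> > 0" and m: "\<beta> 1 < -m" and x: "x \<in> {0<..1}"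
  shows "trunc_sol c \<epsilon> m x > \<beta> x"
proof -
  note Y = trunc_sol[OF e, where c=c and m=m]
  have bc: "continuous_on {0..1} \<beta>" and bn: "\<And>x. x \<in> {0<..1} \<Longrightarrow> \<beta> x < 0"
    using b unfolding lower_barrier_def by auto
  obtain d where d: "\<And>t. t \<in> {0<..<1} \<Longrightarrow> (\<beta> has_real_derivative d t) (at t) \<and> d t \<ge> h t - c - q t / \<beta> t"
    using b unfolding lower_barrier_def by metis
  have "(\<lambda>t. trunc_sol c \<epsilon> m t - \<beta> t) x > 0"
  proof (rule positive_backward_of_linear_growth[where b=1 and w="\<lambda>t. trunc_sol c \<epsilon> m t - \<beta> t"
        and L="q_bound / \<epsilon>\<^sup>2" and w'="\<lambda>t. trunc_rhs c \<epsilon> t (trunc_sol c \<epsilon> m t) - d t"])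
    show "continuous_on {x..1} (\<lambda>t. trunc_sol c \<epsilon> m t - \<beta> t)" using x
      by (intro continuous_intros continuous_on_subset[OF Y(1)] continuous_on_subset[OF bc]) auto
  next
    fix t assume t: "t \<in> {x<..<1}"
    then have t01: "t \<in> {0<..<1}" using x by auto
    show "((\<lambda>t. trunc_sol c \<epsilon> m t - \<beta> t) has_real_derivative trunc_rhs c \<epsilon> t (trunc_sol c \<epsilon> m t) - d t) (at t)"
      using Y(2)[OF t01] d[OF t01] by (intro DERIV_diff) auto
    assume pos: "trunc_sol c \<epsilon> m t - \<beta> t > 0"
    have "d t \<ge> trunc_rhs c \<epsilon> t (\<beta> t)" using d[OF t01] trunc_rhs_le[of "\<beta> t" t c \<epsilon>] bn t01 by force
    moreover have "trunc_rhs c \<epsilon> t (trunc_sol c \<epsilon> m t) - trunc_rhs c \<epsilon> t (\<beta> t)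
        \<le> q_bound / \<epsilon>\<^sup>2 * \<bar>trunc_sol c \<epsilon> m t - \<beta> t\<bar>"
      using monotone_lipschitz_rhs.rhs_lipschitz[OF monotone_lipschitz_rhs_trunc[OF e],
          of t c "trunc_sol c \<epsilon> m t" "\<beta> t"] t01 abs_ge_self by force
    ultimately show "trunc_rhs c \<epsilon> t (trunc_sol c \<epsilon> m t) - d t \<le> q_bound / \<epsilon>\<^sup>2 * (trunc_sol c \<epsilon> m t - \<beta> t)"
      using pos by auto
  qed (use x Y(3) m in auto)
  then show ?thesis by simp
qed

lemma shooting_sol_above_barrier:
  assumes b: "lower_barrier c \<beta>" and m: "m > 0" "\<beta> 1 < -m" and x: "x \<in> {0..1}"
  shows "\<beta> x \<le> shooting_sol c m x"
proof -
  consider "x = 0" | "x = 1" | "x \<in> {0<..<1}" using x by fastforce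
  then show ?thesis
  proof cases
    case 3
    have "shooting_sol c m x = trunc_sol c (untrunc_eps c m x) m x" using shooting_sol_eq[OF 3 m(1)] 3 by simp
    moreover have "\<beta> x < trunc_sol c (untrunc_eps c m x) m x"
      using 3 by (intro trunc_sol_above_barrier[OF b untrunc_eps(1)[OF 3 m(1), where c=c] m(2)]) auto
    ultimately show ?thesis by simp
  qed (use b m in \<open>auto simp: shooting_sol_def lower_barrier_def\<close>)
qed

lemma solP_shooting_sol:
  assumes b: "lower_barrier c \<beta>" and m: "m > 0" "\<beta> 1 < -m"
  shows "solP h q c (shooting_sol c m)"
proof (rule solPI)
  have bc: "continuous_on {0..1} \<beta>" and b0: "\<beta> 0 = 0"
    using b unfolding lower_barrier_def by auto
  show "continuous_on {0..1} (shooting_sol c m)"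
  proof (rule continuous_on_IccI)
    show "continuous (at 0 within {0..1}) (shooting_sol c m)"
    proof (rule continuous_within_squeeze_nonpos[where z="shooting_sol c m" and \<beta>=\<beta> and x=0])
      show "continuous (at 0 within {0..1}) \<beta>" using bc by (simp add: continuous_on_eq_continuous_within)
      fix y :: real assume y: "y \<in> {0..1}"
      have "shooting_sol c m y \<le> 0"
        using shooting_sol_neg[OF _ m(1), of y c] m(1) y by (cases "y = 0 \<or> y = 1") (auto simp: shooting_sol_def)
      then show "\<beta> y \<le> shooting_sol c m y \<and> shooting_sol c m y \<le> 0"
        using shooting_sol_above_barrier[OF b m y] by simp
    qed (simp_all add: b0 shooting_sol_def)
    have half: "1/2 \<in> {0<..<(1::real)}" by simp
    have "continuous (at 1 within {0..1}) (trunc_sol c (untrunc_eps c m (1/2)) m)"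
      using trunc_sol(1)[OF untrunc_eps(1)[OF half m(1), where c=c]] by (simp add: continuous_on_eq_continuous_within)
    then show "continuous (at 1 within {0..1}) (shooting_sol c m)"
    proof (rule continuous_transform_within[where \<delta>="1/2"])
      fix x' :: real assume "x' \<in> {0..1}" "dist x' 1 < 1/2"
      then have "x' \<in> {1/2..1}" by (auto simp: dist_real_def)
      then show "trunc_sol c (untrunc_eps c m (1/2)) m x' = shooting_sol c m x'"
        using shooting_sol_eq[OF half m(1)] by simp
    qed (auto simp: shooting_sol_def)
  qed (use shooting_sol_deriv[OF _ m(1)] in \<open>auto intro: DERIV_isCont\<close>)
qed (use shooting_sol_neg m shooting_sol_deriv in \<open>auto simp: shooting_sol_def\<close>)

lemma sol00_of_incseq:
  fixes Y :: "nat \<Rightarrow> real \<Rightarrow> real"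
  assumes sol: "\<And>n. solP h q c (Y n)" and inc: "\<And>x. x \<in> {0..1} \<Longrightarrow> incseq (\<lambda>n. Y n x)"
    and end_lim: "(\<lambda>n. Y n 1) \<longlonglongrightarrow> 0"
    and \<beta>: "continuous (at 0 within {0..1}) \<beta>" "\<beta> 0 = 0" "\<And>x. x \<in> {0..1} \<Longrightarrow> \<beta> x \<le> Y 0 x"
  shows "\<exists>z. solP00 h q c z"
proof -
  define Z where "Z x = (SUP n. Y n x)" for x
  have YZ: "(\<lambda>n. Y n x) \<longlonglongrightarrow> Z x" if x: "x \<in> {0..1}" for x
    unfolding Z_def using inc[OF x] sol_nonpos[OF sol x]
    by (intro LIMSEQ_incseq_SUP) (auto intro: bdd_aboveI[of _ 0])
  have YleZ: "Y n x \<le> Z x" if "x \<in> {0..1}" for n x by (rule incseq_le[OF inc YZ, OF that that])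
  have Zle0: "Z x \<le> 0" if "x \<in> {0..1}" for x
    by (rule LIMSEQ_le_const2[OF YZ[OF that]]) (use sol_nonpos[OF sol that] in auto)
  have Z0: "Z 0 = 0" using YZ[of 0] sol by (simp add: solP_def LIMSEQ_const_iff)
  have Z1: "Z 1 = 0" using LIMSEQ_unique[OF YZ[of 1] end_lim] by simp
  have Zd: "Z x < 0 \<and> (Z has_real_derivative h x - c - q x / Z x) (at x)" if "x \<in> {0<..<1}" for x
    using sol_limit[where cs="\<lambda>_. c" and K="\<bar>c\<bar>", OF sol tendsto_const order_refl YZ that] by auto
  have "continuous_on {0..1} Z"
  proof (rule continuous_on_IccI)
    show "continuous (at 0 within {0..1}) Z"
    proof (rule continuous_within_squeeze_nonpos[where \<beta>=\<beta> and z=Z and x=0])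
      fix y :: real assume "y \<in> {0..1}"
      then show "\<beta> y \<le> Z y \<and> Z y \<le> 0" using \<beta>(3)[of y] YleZ[of y 0] Zle0[of y] by simp
    qed (simp_all add: \<beta> Z0)
    have "continuous (at 1 within {0..1}) (Y n)" for n
      using sol[of n] by (simp add: solP_def continuous_on_eq_continuous_within)
    then show "continuous (at 1 within {0..1}) Z"
      by (rule continuous_within_Sup_at_max) (use YleZ Zle0 YZ[of 1] Z1 in auto)
  qed (use Zd in \<open>auto intro: DERIV_isCont\<close>)
  with Z0 Zd have "solP h q c Z" by (intro solPI) auto
  with Z1 show ?thesis unfolding solP00_def by blast
qed

text \<open>Shooting from the end values \<open>-m\<close>, \<open>m \<down> 0\<close>, gives an increasing family above the barrier.\<close>
lemma sol00_of_barrier: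
  assumes b: "lower_barrier c \<beta>"
  shows "\<exists>z. solP00 h q c z"
proof -
  have bc: "continuous_on {0..1} \<beta>" and b0: "\<beta> 0 = 0" and b1: "\<beta> 1 < 0"
    using b unfolding lower_barrier_def by auto
  define m where "m n = - \<beta> 1 * inverse (real (Suc (Suc n)))" for n
  have m: "m n > 0" "\<beta> 1 < - m n" "m (Suc n) < m n" for n
  proof -
    show "m n > 0" using b1 by (simp add: m_def mult_neg_pos)
    have "\<beta> 1 / 1 < \<beta> 1 / real (Suc (Suc n))" using b1 by (intro divide_strict_left_mono_neg) auto
    then show "\<beta> 1 < - m n" by (simp add: m_def divide_inverse)
    show "m (Suc n) < m n" using b1 unfolding m_def by (intro mult_strict_left_mono) auto
  qed
  have "m \<longlonglongrightarrow> 0"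
    unfolding m_def using LIMSEQ_Suc[OF LIMSEQ_inverse_real_of_nat] by (rule tendsto_mult_right_zero)
  define Y where "Y n = shooting_sol c (m n)" for n
  have sol: "solP h q c (Y n)" and Y1: "Y n 1 = - m n" for n
    using solP_shooting_sol[OF b m(1,2)] by (auto simp: Y_def shooting_sol_def)
  show ?thesis
  proof (rule sol00_of_incseq[where Y=Y and \<beta>=\<beta>, OF sol _ _ _ b0])
    show "incseq (\<lambda>n. Y n x)" if "x \<in> {0..1}" for x
      using sol_le_of_end_le[OF order_refl sol sol _ that] Y1 m(3) by (intro incseq_SucI) (simp add: less_imp_le)
    show "(\<lambda>n. Y n 1) \<longlonglongrightarrow> 0" using tendsto_minus[OF \<open>m \<longlonglongrightarrow> 0\<close>] by (simp add: Y1)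
    show "continuous (at 0 within {0..1}) \<beta>" using bc by (simp add: continuous_on_eq_continuous_within)
    show "\<beta> x \<le> Y 0 x" if "x \<in> {0..1}" for x
      unfolding Y_def using shooting_sol_above_barrier[OF b m(1,2) that] .
  qed
qed

lemma sol00_of_solP:
  assumes sol: "solP h q c z"
  shows "\<exists>z. solP00 h q c z"
proof (cases "z 1 = 0")
  case True
  then show ?thesis using sol unfolding solP00_def by blast
next
  case False
  then have "z 1 < 0" using sol_end_nonpos[OF sol] by simp
  moreover have "z x < 0" if "x \<in> {0<..<1}" for x using sol that by (simp add: solP_def)
  ultimately have "\<forall>x\<in>{0<..1}. z x < 0" by (metis greaterThanAtMost_iff greaterThanLessThan_iff less_le)
  then have "lower_barrier c z"
    using sol unfolding lower_barrier_def solP_def by blast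
  then show ?thesis by (rule sol00_of_barrier)
qed

text \<open>For \<open>c < c'\<close> the solution for \<open>c\<close>, tilted by \<open>(c' - c) x\<close>, is a barrier for \<open>c'\<close>.\<close>
lemma sol00_mono:
  assumes sol: "solP00 h q c z" and cc: "c < c'"
  shows "\<exists>z. solP00 h q c' z"
proof -
  have zs: "solP h q c z" using sol unfolding solP00_def by auto
  have "lower_barrier c' (\<lambda>x. z x - (c' - c) * x)"
    unfolding lower_barrier_def
  proof (intro conjI ballI)
    show "continuous_on {0..1} (\<lambda>x. z x - (c' - c) * x)"
      using zs unfolding solP_def by (auto intro!: continuous_intros)
    show "z 0 - (c' - c) * 0 = 0" using zs unfolding solP_def by auto
  next
    fix x :: real assume x: "x \<in> {0<..1}"
    then have "(c' - c) * x > 0" using cc by simp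
    then show "z x - (c' - c) * x < 0" using sol_nonpos[OF zs, of x] x by simp
  next
    fix x :: real assume x: "x \<in> {0<..<1}"
    have zn: "z x < 0" using zs x unfolding solP_def by auto
    have "inverse (z x) \<le> inverse (z x - (c' - c) * x)"
      using zn x cc by (intro le_imp_inverse_le_neg) auto
    then have "q x * inverse (z x) \<le> q x * inverse (z x - (c' - c) * x)"
      using q_nonneg[of x] x by (intro mult_left_mono) auto
    then have "h x - c - q x / z x - (c' - c) \<ge> h x - c' - q x / (z x - (c' - c) * x)"
      by (simp add: divide_inverse)
    moreover have "((\<lambda>x. z x - (c' - c) * x) has_real_derivative (h x - c - q x / z x) - (c' - c)) (at x)"
      using zs x unfolding solP_def by (auto intro!: derivative_eq_intros)
    ultimately show "\<exists>d. ((\<lambda>x. z x - (c' - c) * x) has_real_derivative d) (at x) \<and>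
        d \<ge> h x - c' - q x / (z x - (c' - c) * x)"
      by blast
  qed
  then show ?thesis by (rule sol00_of_barrier)
qed

text \<open>The slope of a solution is at least \<open>-(h_bound + \<bar>c\<bar>)\<close>, so \<open>z x + (h_bound + \<bar>c\<bar>) x\<close> is
  monotone and bounded, and \<open>z\<close> has a limit at \<open>1\<close>.\<close>
lemma interior_sol_tendsto_at_left_1:
  assumes Zd: "\<And>x. x \<in> {0<..<1} \<Longrightarrow> Z x < 0 \<and> (Z has_real_derivative h x - c - q x / Z x) (at x)"
  obtains l where "(Z \<longlongrightarrow> l) (at_left 1)"
proof -
  define C where "C = h_bound + \<bar>c\<bar>"
  define W where "W x = Z x + C * x" for x
  have mono: "mono_on {0<..<1} W"
  proof (rule mono_onI)
    fix x y :: real assume xy: "x \<in> {0<..<1}" "y \<in> {0<..<1}" "x \<le> y"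
    have "Z y \<ge> Z x - C * (y - x)"
    proof (rule lower_bound_from_derivative[where y=Z and y'="\<lambda>t. h t - c - q t / Z t"])
      have "isCont Z t" if "t \<in> {x..y}" for t
      proof -
        have "t \<in> {0<..<1}" using that xy by auto
        then show ?thesis using Zd DERIV_isCont by blast
      qed
      then show "continuous_on {x..y} Z" by (intro continuous_at_imp_continuous_on) auto
    next
      fix t assume "t \<in> {x<..<y}"
      then have t: "t \<in> {0<..<1}" using xy by auto
      show "(Z has_real_derivative h t - c - q t / Z t) (at t)" using Zd[OF t] by simp
      show "h t - c - q t / Z t \<ge> - C" using rhs_ge[of t "Z t" c] Zd[OF t] t by (simp add: C_def)
    qed (use xy in simp)
    then show "W x \<le> W y" by (simp add: W_def algebra_simps)
  qed
  have "W x \<le> C" if "x \<in> {0<..<1}" for x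
  proof -
    have "C * x \<le> C" using that h_bound_nonneg by (simp add: C_def mult_left_le)
    then show ?thesis using Zd[OF that] by (simp add: W_def)
  qed
  then have "(W \<longlongrightarrow> (SUP x\<in>{0<..<1}. W x)) (at_left 1)"
    by (intro mono_on_tendsto_SUP_at_left[OF zero_less_one mono] bdd_aboveI2)
  then have "((\<lambda>x. W x - C * x) \<longlongrightarrow> (SUP x\<in>{0<..<1}. W x) - C * 1) (at_left 1)"
    by (intro tendsto_intros)
  then show thesis by (intro that) (simp add: W_def)
qed

lemma solP_of_interior_solution:
  assumes Zd: "\<And>x. x \<in> {0<..<1} \<Longrightarrow> Z x < 0 \<and> (Z has_real_derivative h x - c - q x / Z x) (at x)"
    and Z0: "(Z \<longlongrightarrow> 0) (at_right 0)"
  shows "\<exists>z. solP h q c z"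
proof -
  obtain l where Z1: "(Z \<longlongrightarrow> l) (at_left 1)" using interior_sol_tendsto_at_left_1[OF Zd] by blast
  define z where "z = (\<lambda>x. if x = 0 then 0 else if x = 1 then l else Z x)"
  have zd: "(z has_real_derivative h x - c - q x / z x) (at x)" if x: "x \<in> {0<..<1}" for x
  proof -
    have "(Z has_real_derivative h x - c - q x / Z x) (at x)" using Zd[OF x] by simp
    then have "(z has_real_derivative h x - c - q x / Z x) (at x)"
      by (rule has_field_derivative_transform_within_open[where S="{0<..<1}"]) (use x in \<open>auto simp: z_def\<close>)
    then show ?thesis using x by (simp add: z_def)
  qed
  have "solP h q c z"
  proof (rule solPI)
    show "continuous_on {0..1} z"
    proof (rule continuous_on_IccI)
      have "\<forall>\<^sub>F x in at_right 0. Z x = z x"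
        using eventually_at_right_real[OF zero_less_one] by (rule eventually_mono) (auto simp: z_def)
      then have "(z \<longlongrightarrow> z 0) (at_right 0)" using Z0 by (simp add: tendsto_cong z_def)
      then show "continuous (at 0 within {0..1}) z" by (simp add: continuous_within at_within_Icc_at_right)
      have "\<forall>\<^sub>F x in at_left 1. Z x = z x"
        using eventually_at_left_real[OF zero_less_one] by (rule eventually_mono) (auto simp: z_def)
      then have "(z \<longlongrightarrow> z 1) (at_left 1)" using Z1 by (simp add: tendsto_cong z_def)
      then show "continuous (at 1 within {0..1}) z" by (simp add: continuous_within at_within_Icc_at_left)
    qed (use zd DERIV_isCont in blast)
    show "z x < 0" if "x \<in> {0<..<1}" for x using Zd[OF that] that by (simp add: z_def)
  qed (use zd in \<open>simp_all add: z_def\<close>)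
  then show ?thesis by blast
qed

lemma sol_ge_linear:
  assumes sol: "solP h q c z" and x: "x \<in> {0..1}"
  shows "z x \<ge> - ((h_bound + \<bar>c\<bar>) * x)"
proof -
  have "z x \<ge> z 0 - (h_bound + \<bar>c\<bar>) * (x - 0)"
  proof (rule lower_bound_from_derivative[where y=z and y'="\<lambda>t. h t - c - q t / z t"])
    show "continuous_on {0..x} z" using sol x by (auto simp: solP_def intro: continuous_on_subset)
  next
    fix t assume "t \<in> {0<..<x}"
    then have t: "t \<in> {0<..<1}" using x by auto
    show "(z has_real_derivative h t - c - q t / z t) (at t)" using sol t by (simp add: solP_def)
    show "h t - c - q t / z t \<ge> - (h_bound + \<bar>c\<bar>)" using rhs_ge[of t "z t" c] sol t by (simp add: solP_def)
  qed (use x in simp)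
  moreover have "z 0 = 0" using sol by (simp add: solP_def)
  ultimately show ?thesis by simp
qed

text \<open>A decreasing family of solutions is bounded below by \<open>-C x\<close>, so its infimum vanishes at \<open>0\<close>.\<close>
lemma solP_of_decseq:
  fixes Y :: "nat \<Rightarrow> real \<Rightarrow> real" and cs :: "nat \<Rightarrow> real"
  assumes sol: "\<And>n. solP h q (cs n) (Y n)" and cs: "cs \<longlonglongrightarrow> c" "\<And>n. \<bar>cs n\<bar> \<le> K"
    and dec: "\<And>x. x \<in> {0..1} \<Longrightarrow> decseq (\<lambda>n. Y n x)"
  shows "\<exists>z. solP h q c z"
proof -
  define C where "C = h_bound + K"
  have Y_ge: "- (C * x) \<le> Y n x" if x: "x \<in> {0..1}" for n x
  proof -
    have "(h_bound + \<bar>cs n\<bar>) * x \<le> C * x" using cs(2)[of n] x by (intro mult_right_mono) (auto simp: C_def)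
    then show ?thesis using sol_ge_linear[OF sol x, of n] by linarith
  qed
  define Z where "Z x = (INF n. Y n x)" for x
  have YZ: "(\<lambda>n. Y n x) \<longlonglongrightarrow> Z x" if x: "x \<in> {0..1}" for x
    unfolding Z_def using dec[OF x] Y_ge[OF x] by (intro LIMSEQ_decseq_INF bdd_belowI2) auto
  have Z_bounds: "- (C * x) \<le> Z x \<and> Z x \<le> 0" if x: "x \<in> {0..1}" for x
  proof
    show "- (C * x) \<le> Z x" by (rule LIMSEQ_le_const[OF YZ[OF x]]) (use Y_ge[OF x] in auto)
    show "Z x \<le> 0" by (rule LIMSEQ_le_const2[OF YZ[OF x]]) (use sol_nonpos[OF sol x] in auto)
  qed
  have "(Z \<longlongrightarrow> 0) (at_right 0)"
  proof (rule tendsto_sandwich[of "\<lambda>x. - (C * x)" Z _ "\<lambda>_. 0"])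
    have ev: "eventually (\<lambda>x. x \<in> {0..1}) (at_right (0::real))"
      using eventually_at_right_real[OF zero_less_one] by (rule eventually_mono) auto
    show "eventually (\<lambda>x. - (C * x) \<le> Z x) (at_right 0)"
      using ev by (rule eventually_mono) (use Z_bounds in blast)
    show "eventually (\<lambda>x. Z x \<le> 0) (at_right 0)"
      using ev by (rule eventually_mono) (use Z_bounds in blast)
    show "((\<lambda>x. - (C * x)) \<longlongrightarrow> 0) (at_right 0)" by (auto intro!: tendsto_eq_intros)
  qed simp
  moreover have "Z x < 0 \<and> (Z has_real_derivative h x - c - q x / Z x) (at x)" if "x \<in> {0<..<1}" for x
    using sol_limit[OF sol cs YZ that] by auto
  ultimately show ?thesis using solP_of_interior_solution by blast
qed

lemma sol00_of_sol00_above: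
  assumes up: "\<And>c. c > c0 \<Longrightarrow> \<exists>z. solP00 h q c z"
  shows "\<exists>z. solP00 h q c0 z"
proof -
  define cs where "cs n = c0 + inverse (real (Suc n))" for n
  have cs: "cs n > c0" "\<bar>cs n\<bar> \<le> \<bar>c0\<bar> + 1" "cs (Suc n) \<le> cs n" for n
  proof -
    have "0 < inverse (real (Suc n))" "inverse (real (Suc n)) \<le> 1" by (auto simp: inverse_le_1_iff)
    then show "cs n > c0" "\<bar>cs n\<bar> \<le> \<bar>c0\<bar> + 1"
      using abs_triangle_ineq[of c0 "inverse (real (Suc n))"] by (auto simp: cs_def)
    show "cs (Suc n) \<le> cs n" by (simp add: cs_def)
  qed
  have cs_lim: "cs \<longlonglongrightarrow> c0"
    unfolding cs_def using tendsto_add[OF tendsto_const LIMSEQ_inverse_real_of_nat] by simp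
  have "\<forall>n. \<exists>z. solP00 h q (cs n) z" using up cs(1) by blast
  from choice[OF this] obtain z where z: "\<forall>n. solP00 h q (cs n) (z n)" by blast
  then have sol: "solP h q (cs n) (z n)" and z1: "z n 1 = 0" for n by (auto simp: solP00_def)
  have "decseq (\<lambda>n. z n x)" if "x \<in> {0..1}" for x
    using sol_le_of_end_le[OF cs(3) sol sol _ that] z1 by (intro decseq_SucI) simp
  then obtain z0 where "solP h q c0 z0" using solP_of_decseq[OF sol cs_lim cs(2)] by blast
  then show ?thesis by (rule sol00_of_solP)
qed

subsection \<open>Bounds on the minimal speed\<close>

lemma bdd_above_q_quotient:
  assumes ls: "Limsup (at_right 0) (\<lambda>x. ereal (q x / x)) < \<infinity>"
  shows "bdd_above ((\<lambda>x. q x / x) ` {0<..1})"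
proof -
  obtain K :: real where K: "Limsup (at_right 0) (\<lambda>x. ereal (q x / x)) < ereal K"
  proof (cases "Limsup (at_right 0) (\<lambda>x. ereal (q x / x))")
    case (real r) then show ?thesis using that[of "r + 1"] by auto
  next
    case MInf then show ?thesis using that[of 0] by simp
  qed (use ls in simp)
  have "eventually (\<lambda>x. ereal (q x / x) < ereal K) (at_right 0)" by (rule Limsup_lessD[OF K])
  then obtain b :: real where b: "b > 0" "\<And>y. y > 0 \<Longrightarrow> y < b \<Longrightarrow> q y / y < K"
    unfolding eventually_at_right_field by auto
  show ?thesis
  proof (rule bdd_aboveI2[of _ _ "max K (q_bound / b)"])
    fix x :: real assume x: "x \<in> {0<..1}"
    show "q x / x \<le> max K (q_bound / b)"
    proof (cases "x < b")
      case True then show ?thesis using b(2)[of x] x by auto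
    next
      case False
      have "q x / x \<le> q_bound / x" using q_le[of x] x by (intro divide_right_mono) auto
      also have "\<dots> \<le> q_bound / b" using False b q_bound_pos by (intro divide_left_mono) auto
      finally show ?thesis by simp
    qed
  qed
qed

text \<open>With \<open>M\<close> and \<open>F\<close> bounding \<open>q x / x\<close> and \<open>f x / x\<close>, the line \<open>f x - (F + \<surd>M) x\<close> lies below
  \<open>-\<surd>M x\<close>, so \<open>-q/\<beta> \<le> \<surd>M\<close> and it is a barrier for \<open>c = 2 \<surd>M + F\<close>.\<close>
lemma lower_barrier_linear:
  assumes f: "\<And>x. x \<in> {0<..<1} \<Longrightarrow> (f has_real_derivative h x) (at x)" "continuous_on {0..1} f" "f 0 = 0"
    and M: "\<And>x. x \<in> {0<..1} \<Longrightarrow> q x / x \<le> M" and F: "\<And>x. x \<in> {0<..1} \<Longrightarrow> f x / x \<le> F"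
  shows "lower_barrier (2 * sqrt M + F) (\<lambda>x. f x - (F + sqrt M) * x)"
  unfolding lower_barrier_def
proof (intro conjI ballI)
  have M0: "M > 0" using M[of "1/2"] q_pos[of "1/2"] by simp
  then have sM: "sqrt M > 0" "sqrt M * sqrt M = M" by auto
  have below: "f x - (F + sqrt M) * x \<le> - sqrt M * x" if "x \<in> {0<..1}" for x
    using F[OF that] that by (simp add: divide_le_eq algebra_simps)
  show "continuous_on {0..1} (\<lambda>x. f x - (F + sqrt M) * x)" using f(2) by (intro continuous_intros)
  show "f 0 - (F + sqrt M) * 0 = 0" using f(3) by simp
  show "f x - (F + sqrt M) * x < 0" if "x \<in> {0<..1}" for x
  proof -
    have "sqrt M * x > 0" using sM that by simp
    then show ?thesis using below[OF that] by linarith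
  qed
  fix x :: real assume x: "x \<in> {0<..<1}"
  then have x1: "x \<in> {0<..1}" by auto
  have sx: "sqrt M * x > 0" using sM x by simp
  have "q x / (- (f x - (F + sqrt M) * x)) \<le> q x / (sqrt M * x)"
  proof (rule divide_left_mono)
    have "- (f x - (F + sqrt M) * x) > 0" using below[OF x1] sx by linarith
    then show "0 < - (f x - (F + sqrt M) * x) * (sqrt M * x)" using sx by (rule mult_pos_pos)
  qed (use below[OF x1] q_nonneg[of x] x in auto)
  also have "\<dots> = (q x / x) / sqrt M" using x sM by (simp add: field_simps)
  also have "\<dots> \<le> sqrt M" by (simp only: pos_divide_le_eq[OF sM(1)] sM(2) M[OF x1])
  finally have "h x - (F + sqrt M) \<ge> h x - (2 * sqrt M + F) - q x / (f x - (F + sqrt M) * x)"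
    by (simp add: minus_divide_right)
  moreover have "((\<lambda>x. f x - (F + sqrt M) * x) has_real_derivative h x - (F + sqrt M)) (at x)"
    using f(1)[OF x] by (auto intro!: derivative_eq_intros)
  ultimately show "\<exists>d. ((\<lambda>x. f x - (F + sqrt M) * x) has_real_derivative d) (at x) \<and>
      d \<ge> h x - (2 * sqrt M + F) - q x / (f x - (F + sqrt M) * x)"
    by blast
qed

lemma sol00_unique:
  assumes "solP00 h q c z1" "solP00 h q c z2" "x \<in> {0..1}"
  shows "z1 x = z2 x"
  using sol_le_of_end_le[OF order_refl, of c z1 z2 x] sol_le_of_end_le[OF order_refl, of c z2 z1 x] assms
  by (auto simp: solP00_def)

lemma liminf_q_quotient_real:
  assumes ls: "Limsup (at_right 0) (\<lambda>x. ereal (q x / x)) < \<infinity>"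
  obtains l where "Liminf (at_right 0) (\<lambda>x. ereal (q x / x)) = ereal l" "l \<ge> 0"
proof -
  have "eventually (\<lambda>x. 0 \<le> ereal (q x / x)) (at_right (0::real))"
    using eventually_at_right_real[OF zero_less_one] by (rule eventually_mono) (auto intro!: divide_nonneg_pos q_nonneg)
  then have "0 \<le> Liminf (at_right 0) (\<lambda>x. ereal (q x / x))" by (rule Liminf_bounded)
  moreover have "Liminf (at_right 0) (\<lambda>x. ereal (q x / x)) \<le> Limsup (at_right 0) (\<lambda>x. ereal (q x / x))"
    by (rule Liminf_le_Limsup) simp
  then have "Liminf (at_right 0) (\<lambda>x. ereal (q x / x)) < \<infinity>" using ls by (rule le_less_trans)
  ultimately show ?thesis using that by (cases "Liminf (at_right 0) (\<lambda>x. ereal (q x / x))") auto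
qed

lemma q_quotient_lower_witness:
  assumes Li: "Liminf (at_right 0) (\<lambda>x. ereal (q x / x)) = ereal l" and t: "t < sqrt l"
  obtains a d where "0 \<le> a" "t < sqrt a" "d > 0" "\<And>x. 0 < x \<Longrightarrow> x < d \<Longrightarrow> a * x \<le> q x"
proof (cases "t < 0")
  case True
  show ?thesis by (rule that[of 0 1]) (use True q_nonneg in auto)
next
  case False
  define s where "s = (t + sqrt l) / 2"
  have s: "0 \<le> s" "t < s" "s < sqrt l" using False t by (auto simp: s_def)
  then have "sqrt (s\<^sup>2) < sqrt l" by simp
  then have "s\<^sup>2 < l" by (simp only: real_sqrt_less_iff)
  then have "eventually (\<lambda>x. ereal (s\<^sup>2) < ereal (q x / x)) (at_right 0)"
    using Li by (intro less_LiminfD) auto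
  then obtain d :: real where d: "d > 0" "\<And>x. x > 0 \<Longrightarrow> x < d \<Longrightarrow> s\<^sup>2 < q x / x"
    unfolding eventually_at_right_field by auto
  show ?thesis
  proof (rule that[of "s\<^sup>2" d])
    fix x :: real assume "0 < x" "x < d"
    then show "s\<^sup>2 * x \<le> q x" using d(2)[of x] by (simp add: field_simps)
  qed (use s d in auto)
qed

text \<open>With \<open>u = -z/x\<close> one has \<open>(z/x)' = (z' + u)/x\<close> and \<open>z' + u \<ge> h - c + u + a/u \<ge> h - c + 2 \<surd>a\<close>.\<close>
lemma sol_quotient_deriv_ge:
  assumes sol: "solP h q c z" and x: "x \<in> {0<..<1}" and a: "0 \<le> a" "a * x \<le> q x"
  shows "\<exists>D. ((\<lambda>x. z x / x) has_real_derivative D) (at x) \<and> D \<ge> (h x - c + 2 * sqrt a) / x"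
proof -
  have zx: "z x < 0" and zd: "(z has_real_derivative h x - c - q x / z x) (at x)"
    using sol x by (auto simp: solP_def)
  define u where "u = - z x / x"
  have u: "u > 0" using zx x by (simp add: u_def divide_neg_pos)
  have "((\<lambda>x. z x / x) has_real_derivative ((h x - c - q x / z x) * x - z x * 1) / (x * x)) (at x)"
    using zd x by (intro DERIV_divide DERIV_ident) auto
  moreover have "((h x - c - q x / z x) * x - z x * 1) / (x * x) = (h x - c + (q x / x) / u + u) / x"
    using x zx by (simp add: u_def field_simps)
  moreover have "(q x / x) / u \<ge> a / u" using a x u by (intro divide_right_mono) (auto simp: field_simps)
  then have "h x - c + (q x / x) / u + u \<ge> h x - c + 2 * sqrt a"
    using add_divide_ge_2_sqrt[OF u a(1)] by linarith
  ultimately show ?thesis using x by (auto intro!: exI divide_right_mono)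
qed

lemma sol_quotient_log_mono:
  assumes sol: "solP h q c z" and a: "0 \<le> a" and \<delta>: "\<delta> \<le> 1"
    and bound: "\<And>x. x \<in> {0<..<\<delta>} \<Longrightarrow> a * x \<le> q x \<and> g \<le> h x - c + 2 * sqrt a"
    and x: "0 < x1" "x1 \<le> x2" "x2 < \<delta>"
  shows "z x1 / x1 - g * ln x1 \<le> z x2 / x2 - g * ln x2"
proof (rule DERIV_nonneg_imp_increasing_open[OF x(2)])
  fix x assume "x1 < x" "x < x2"
  then have x01: "x \<in> {0<..<1}" and xd: "x \<in> {0<..<\<delta>}" using x \<delta> by auto
  obtain D where D: "((\<lambda>x. z x / x) has_real_derivative D) (at x)" "D \<ge> (h x - c + 2 * sqrt a) / x"
    using sol_quotient_deriv_ge[OF sol x01 a] bound[OF xd] by blast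
  have "(h x - c + 2 * sqrt a) / x \<ge> g / x" using bound[OF xd] x01 by (intro divide_right_mono) auto
  moreover have "((\<lambda>x. g * ln x) has_real_derivative g * (1 / x)) (at x)"
    using x01 by (auto intro!: derivative_eq_intros)
  from DERIV_diff[OF D(1) this]
  have "((\<lambda>x. z x / x - g * ln x) has_real_derivative D - g * (1 / x)) (at x)" .
  ultimately show "\<exists>y. ((\<lambda>x. z x / x - g * ln x) has_real_derivative y) (at x) \<and> 0 \<le> y"
    using D(2) by (intro exI[of _ "D - g * (1 / x)"]) auto
next
  have "isCont (\<lambda>x. z x / x - g * ln x) x" if "x \<in> {x1..x2}" for x
  proof -
    have "x \<in> {0<..<1}" using that x \<delta> by auto
    then have "(z has_real_derivative h x - c - q x / z x) (at x)" using sol by (simp add: solP_def)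
    then have "isCont z x" by (rule DERIV_isCont)
    then show ?thesis using that x by (auto intro!: continuous_intros)
  qed
  then show "continuous_on {x1..x2} (\<lambda>x. z x / x - g * ln x)" by (intro continuous_at_imp_continuous_on) auto
qed

text \<open>Below the bound, \<open>z/x\<close> would decrease like \<open>g ln x\<close> towards \<open>0\<close>, contradicting \<open>z \<ge> -C x\<close>.\<close>
lemma speed_lower_bound:
  assumes ls: "Limsup (at_right 0) (\<lambda>x. ereal (q x / x)) < \<infinity>" and sol: "solP h q c z"
  shows "h 0 + 2 * sqrt (real_of_ereal (Liminf (at_right 0) (\<lambda>x. ereal (q x / x)))) \<le> c"
proof (rule ccontr)
  obtain l where Li: "Liminf (at_right 0) (\<lambda>x. ereal (q x / x)) = ereal l" "l \<ge> 0"
    using liminf_q_quotient_real[OF ls] by blast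
  assume "\<not> ?thesis"
  then have "(c - h 0) / 2 < sqrt l" using Li by simp
  then obtain a d1 where a: "0 \<le> a" "(c - h 0) / 2 < sqrt a" "d1 > 0" "\<And>x. 0 < x \<Longrightarrow> x < d1 \<Longrightarrow> a * x \<le> q x"
    using q_quotient_lower_witness[OF Li(1)] by blast
  define g where "g = (h 0 + 2 * sqrt a - c) / 2"
  have g: "g > 0" using a(2) by (simp add: g_def)
  obtain d2 where d2: "d2 > 0" "\<And>x. x \<in> {0..1} \<Longrightarrow> dist x 0 < d2 \<Longrightarrow> dist (h x) (h 0) < g"
    using h_cont g unfolding continuous_on_iff by (metis atLeastAtMost_iff order_refl zero_le_one)
  define \<delta> where "\<delta> = min (min d1 d2) 1"
  have bound: "a * x \<le> q x \<and> g \<le> h x - c + 2 * sqrt a" if "x \<in> {0<..<\<delta>}" for x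
  proof
    show "a * x \<le> q x" using a(4)[of x] that by (auto simp: \<delta>_def)
    have "h 0 - g < h x" using d2(2)[of x] that by (auto simp: \<delta>_def dist_real_def abs_less_iff)
    then show "g \<le> h x - c + 2 * sqrt a" unfolding g_def by (simp add: field_simps)
  qed
  define C where "C = h_bound + \<bar>c\<bar>"
  define x2 where "x2 = \<delta> / 2"
  define x1 where "x1 = x2 * exp (- (C / g + 1))"
  have x2: "0 < x2" "x2 < \<delta>" "\<delta> \<le> 1" using a(3) d2(1) by (auto simp: x2_def \<delta>_def)
  have "C / g \<ge> 0" using g h_bound_nonneg by (simp add: C_def)
  then have "exp (- (C / g + 1)) \<le> 1" by simp
  then have x1: "0 < x1" "x1 \<le> x2" using x2 mult_left_le[of _ x2] by (auto simp: x1_def)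
  have "z x1 / x1 \<le> z x2 / x2 - g * (ln x2 - ln x1)"
    using sol_quotient_log_mono[OF sol a(1) x2(3) bound x1 x2(2)] by (simp add: algebra_simps)
  also have "ln x2 - ln x1 = C / g + 1" using x2 by (simp add: x1_def ln_mult)
  also have "z x2 / x2 < 0" using sol x2 by (auto simp: solP_def divide_neg_pos)
  finally have "z x1 / x1 < - C - g" using g by (simp add: algebra_simps)
  moreover have "z x1 \<ge> - (C * x1)" using sol_ge_linear[OF sol, of x1] x1 x2 by (simp add: C_def)
  then have "z x1 / x1 \<ge> - C" using x1 by (simp add: field_simps)
  ultimately show False using g by simp
qed

lemma sol00_at_upper_bound:
  assumes f: "\<forall>x\<in>{0..1}. (f has_real_derivative h x) (at x within {0..1})" "f 0 = 0"
    and ls: "Limsup (at_right 0) (\<lambda>x. ereal (q x / x)) < \<infinity>"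
  shows "\<exists>z. solP00 h q (2 * sqrt (Sup ((\<lambda>x. q x / x) ` {0<..1})) + Sup ((\<lambda>x. f x / x) ` {0<..1})) z"
proof -
  have fd: "(f has_real_derivative h x) (at x)" if "x \<in> {0<..<1}" for x
  proof -
    have "(f has_real_derivative h x) (at x within {0..1})" using f(1) that by auto
    moreover have "at x within {0..1} = at x" using that by (intro at_within_interior) auto
    ultimately show ?thesis by simp
  qed
  have fc: "continuous_on {0..1} f" using f(1) by (intro DERIV_continuous_on) auto
  have "f x / x \<le> h_bound" if x: "x \<in> {0<..1}" for x
  proof -
    have "- f x \<ge> - f 0 - h_bound * (x - 0)"
    proof (rule lower_bound_from_derivative[where y="\<lambda>t. - f t" and y'="\<lambda>t. - h t"])
      show "continuous_on {0..x} (\<lambda>t. - f t)" using fc x by (auto intro!: continuous_intros intro: continuous_on_subset)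
    next
      fix t assume "t \<in> {0<..<x}"
      then have t: "t \<in> {0<..<1}" using x by auto
      show "((\<lambda>t. - f t) has_real_derivative - h t) (at t)" using fd[OF t] by (rule DERIV_minus)
      show "- h t \<ge> - h_bound" using abs_h_le[of t] t by auto
    qed (use x in simp)
    then show ?thesis using x f(2) by (simp add: divide_le_eq)
  qed
  then have F: "f x / x \<le> Sup ((\<lambda>x. f x / x) ` {0<..1})" if "x \<in> {0<..1}" for x
    using that by (intro cSUP_upper bdd_aboveI2) auto
  have M: "q x / x \<le> Sup ((\<lambda>x. q x / x) ` {0<..1})" if "x \<in> {0<..1}" for x
    using cSUP_upper[OF that bdd_above_q_quotient[OF ls]] .
  show ?thesis by (rule sol00_of_barrier[OF lower_barrier_linear[OF fd fc f(2) M F]])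
qed

lemma sol00_speeds_eq_atLeast:
  assumes ls: "Limsup (at_right 0) (\<lambda>x. ereal (q x / x)) < \<infinity>" and U: "\<exists>z. solP00 h q U z"
  obtains cs where "{c. \<exists>z. solP00 h q c z} = {cs..}" "cs \<le> U"
    "h 0 + 2 * sqrt (real_of_ereal (Liminf (at_right 0) (\<lambda>x. ereal (q x / x)))) \<le> cs"
proof -
  define S where "S = {c. \<exists>z. solP00 h q c z}"
  define L where "L = h 0 + 2 * sqrt (real_of_ereal (Liminf (at_right 0) (\<lambda>x. ereal (q x / x))))"
  have L: "L \<le> c" if "c \<in> S" for c
    using that speed_lower_bound[OF ls] by (auto simp: S_def L_def solP00_def)
  have S: "S = {Inf S..}"
  proof (rule eq_atLeast_Inf)
    show "S \<noteq> {}" using U by (auto simp: S_def)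
    show "bdd_below S" using L by (intro bdd_belowI[of _ L]) auto
    show "c' \<in> S" if "c \<in> S" "c < c'" for c c' using that sol00_mono by (auto simp: S_def)
    show "c \<in> S" if "\<And>c'. c < c' \<Longrightarrow> c' \<in> S" for c
      using sol00_of_sol00_above[of c] that by (simp add: S_def)
  qed
  have U_mem: "U \<in> S" using U by (simp add: S_def)
  have Inf_mem: "Inf S \<in> S" by (subst S) simp
  show thesis
  proof (rule that[of "Inf S"])
    show "{c. \<exists>z. solP00 h q c z} = {Inf S..}" using S unfolding S_def .
    show "Inf S \<le> U" using U_mem by (subst (asm) S) simp
    show "h 0 + 2 * sqrt (real_of_ereal (Liminf (at_right 0) (\<lambda>x. ereal (q x / x)))) \<le> Inf S"
      using L[OF Inf_mem] by (simp add: L_def)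
  qed
qed

end

theorem proposition4p2:
  fixes f h q :: "real \<Rightarrow> real"
  assumes f_deriv: "\<forall>x\<in>{0..1}. (f has_real_derivative h x) (at x within {0..1})"
    and h_cont: "continuous_on {0..1} h"
    and f0: "f 0 = 0"
    and q: "cond_q q"
  shows "\<exists>cs::real.
     h 0 + 2 * sqrt (real_of_ereal (Liminf (at_right 0) (\<lambda>x. ereal (q x / x)))) \<le> cs \<and>
     cs \<le> 2 * sqrt (Sup ((\<lambda>x. q x / x) ` {0<..1})) + Sup ((\<lambda>x. f x / x) ` {0<..1}) \<and>
     (\<forall>c. (\<exists>z. solP00 h q c z) \<longleftrightarrow> c \<ge> cs) \<and>
     (\<forall>c\<ge>cs. \<forall>z1 z2. solP00 h q c z1 \<and> solP00 h q c z2 \<longrightarrow> (\<forall>x\<in>{0..1}. z1 x = z2 x))"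
proof -
  interpret singular_ode h q
    using h_cont q unfolding cond_q_def by unfold_locales auto
  have ls: "Limsup (at_right 0) (\<lambda>x. ereal (q x / x)) < \<infinity>" using q unfolding cond_q_def by auto
  obtain cs where S: "{c. \<exists>z. solP00 h q c z} = {cs..}"
    and bounds: "cs \<le> 2 * sqrt (Sup ((\<lambda>x. q x / x) ` {0<..1})) + Sup ((\<lambda>x. f x / x) ` {0<..1})"
      "h 0 + 2 * sqrt (real_of_ereal (Liminf (at_right 0) (\<lambda>x. ereal (q x / x)))) \<le> cs"
    using sol00_speeds_eq_atLeast[OF ls sol00_at_upper_bound[OF f_deriv f0 ls]] .
  show ?thesis
  proof (intro exI[of _ cs] conjI allI impI ballI)
    show "(\<exists>z. solP00 h q c z) \<longleftrightarrow> cs \<le> c" for c using S[unfolded set_eq_iff] by simp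
    show "z1 x = z2 x" if "solP00 h q c z1 \<and> solP00 h q c z2" "x \<in> {0..1}" for c z1 z2 x
      using sol00_unique that by blast
  qed (use bounds in auto)
qed

end
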